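(* Let $n\ge1$, let $A$ be a smooth $\mathbb{R}_{0,m}$-valued function of $\underline{y}$ with $\widetilde{U}^n(A)=0$, where $\widetilde{U}(A)=A+e_1Ae_1+A\partial_{\underline{y}}$ and $\widetilde U^n$ is its $n$-fold composition, and let $$B(\underline{y})=\sum_{k=1}^n c_k\,\partial_{\underline{y}}^{2k-1}A(\underline{y})$$ with arbitrary real constants $c_k$. Then $$F(X)=\exp(z)A(\underline{y})+\exp(\overline{z})B(\underline{y})$$ is right $n$-monogenic (i.e. $F\partial_X^n=0$). In particular, if the constants are taken as $c_1=-\frac12$ and $c_k=-\frac{1}{2^k}\sum_{j=1}^{\lfloor k/2\rfloor}\sum_{i=1}^{j}\binom{k+1}{2j+1}\binom{j}{i}c_{k-i}$ for $k\ge2$, then $F$ is also left $n$-monogenic (i.e. $\partial_X^nF=0$).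
   Context: Let $m\ge 2$ and let $\mathbb{R}_{0,m}$ be the real Clifford algebra generated by $e_1,\dots,e_m$ with $e_i^2=-1$ and $e_ie_j=-e_je_i$ for $i\neq j$; all products are Clifford products. Identify $(x_0,\dots,x_m)\in\mathbb{R}^{m+1}$ with $X=x_0+\sum_{j=1}^m x_je_j$, and write $z=x_0+x_1e_1$, $\overline{z}=x_0-x_1e_1$, $\underline{y}=\sum_{j=2}^m x_je_j$; $\exp(z)=e^{x_0}(\cos x_1+e_1\sin x_1)$, $\exp(\overline z)=e^{x_0}(\cos x_1-e_1\sin x_1)$. Operators: $\partial_X f=\partial_{x_0}f+\sum_{j=1}^m e_j\partial_{x_j}f$, $f\partial_X=\partial_{x_0}f+\sum_{j=1}^m(\partial_{x_j}f)e_j$, $\partial_{\underline{y}}f=\sum_{j=2}^m e_j\partial_{x_j}f$, $f\partial_{\underline{y}}=\sum_{j=2}^m(\partial_{x_j}f)e_j$; powers denote iterated application on the same side. *)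

theory Defs
  imports "HOL-Analysis.Analysis"
begin

text \<open>Elements of the Clifford algebra R_{0,m} are represented by their coefficient
  functions on blades: a blade e_A (A a finite subset of {1..m}, e_A = e_{a1}...e_{ak}
  with a1 < ... < ak) has coefficient a A.  Elements of R_{0,m} are exactly those
  coefficient functions vanishing outside Pow {1..m}.\<close>

type_synonym clif = "nat set \<Rightarrow> real"

text \<open>Sign in e_A e_B = csign A B e_(A symmetric difference B), with e_i^2 = -1.\<close>
definition csign :: "nat set \<Rightarrow> nat set \<Rightarrow> real" where
  "csign A B = (-1) ^ (card {(i, j). i \<in> A \<and> j \<in> B \<and> j < i} + card (A \<inter> B))"

definition clmul :: "nat \<Rightarrow> clif \<Rightarrow> clif \<Rightarrow> clif" where
  "clmul m a b = (\<lambda>C. \<Sum>A\<in>Pow {1..m}. \<Sum>B\<in>Pow {1..m}.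
      if (A - B) \<union> (B - A) = C then csign A B * a A * b B else 0)"

definition cladd :: "clif \<Rightarrow> clif \<Rightarrow> clif" where
  "cladd a b = (\<lambda>C. a C + b C)"

definition clzero :: clif where
  "clzero = (\<lambda>C. 0)"

definition gen :: "nat \<Rightarrow> clif" where
  "gen j = (\<lambda>C. if C = {j} then 1 else 0)"

text \<open>Points X = x_0 + sum x_j e_j are represented by coordinate functions x :: nat => real
  (only coordinates 0..m are relevant).\<close>

definition cexpz :: "(nat \<Rightarrow> real) \<Rightarrow> clif" where
  "cexpz x = (\<lambda>C. if C = {} then exp (x 0) * cos (x 1)
                 else if C = {1} then exp (x 0) * sin (x 1) else 0)"

definition cexpzbar :: "(nat \<Rightarrow> real) \<Rightarrow> clif" where
  "cexpzbar x = (\<lambda>C. if C = {} then exp (x 0) * cos (x 1)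
                 else if C = {1} then - (exp (x 0) * sin (x 1)) else 0)"

definition pd :: "nat \<Rightarrow> ((nat \<Rightarrow> real) \<Rightarrow> clif) \<Rightarrow> (nat \<Rightarrow> real) \<Rightarrow> clif" where
  "pd j f x = (\<lambda>C. deriv (\<lambda>t. f (x(j := t)) C) (x j))"

fun pds :: "nat list \<Rightarrow> ((nat \<Rightarrow> real) \<Rightarrow> clif) \<Rightarrow> (nat \<Rightarrow> real) \<Rightarrow> clif" where
  "pds [] f = f"
| "pds (j # js) f = pd j (pds js f)"

definition ldirac :: "nat \<Rightarrow> ((nat \<Rightarrow> real) \<Rightarrow> clif) \<Rightarrow> (nat \<Rightarrow> real) \<Rightarrow> clif" where
  "ldirac m f x = (\<lambda>C. pd 0 f x C + (\<Sum>j=1..m. clmul m (gen j) (pd j f x) C))"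

definition rdirac :: "nat \<Rightarrow> ((nat \<Rightarrow> real) \<Rightarrow> clif) \<Rightarrow> (nat \<Rightarrow> real) \<Rightarrow> clif" where
  "rdirac m f x = (\<lambda>C. pd 0 f x C + (\<Sum>j=1..m. clmul m (pd j f x) (gen j) C))"

definition ldy :: "nat \<Rightarrow> ((nat \<Rightarrow> real) \<Rightarrow> clif) \<Rightarrow> (nat \<Rightarrow> real) \<Rightarrow> clif" where
  "ldy m f x = (\<lambda>C. \<Sum>j=2..m. clmul m (gen j) (pd j f x) C)"

definition rdy :: "nat \<Rightarrow> ((nat \<Rightarrow> real) \<Rightarrow> clif) \<Rightarrow> (nat \<Rightarrow> real) \<Rightarrow> clif" where
  "rdy m f x = (\<lambda>C. \<Sum>j=2..m. clmul m (pd j f x) (gen j) C)"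

definition Utilde :: "nat \<Rightarrow> ((nat \<Rightarrow> real) \<Rightarrow> clif) \<Rightarrow> (nat \<Rightarrow> real) \<Rightarrow> clif" where
  "Utilde m f x = (\<lambda>C. f x C + clmul m (clmul m (gen 1) (f x)) (gen 1) C + rdy m f x C)"

definition clif_valued :: "nat \<Rightarrow> ((nat \<Rightarrow> real) \<Rightarrow> clif) \<Rightarrow> bool" where
  "clif_valued m f \<longleftrightarrow> (\<forall>x C. \<not> C \<subseteq> {1..m} \<longrightarrow> f x C = 0)"

definition depends_on_y :: "nat \<Rightarrow> ((nat \<Rightarrow> real) \<Rightarrow> clif) \<Rightarrow> bool" where
  "depends_on_y m f \<longleftrightarrow> (\<forall>x x'. (\<forall>j\<in>{2..m}. x j = x' j) \<longrightarrow> f x = f x')"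

definition smooth_y :: "nat \<Rightarrow> ((nat \<Rightarrow> real) \<Rightarrow> clif) \<Rightarrow> bool" where
  "smooth_y m f \<longleftrightarrow> (\<forall>js\<in>lists {2..m}. \<forall>C.
      continuous_on UNIV (\<lambda>x. pds js f x C) \<and>
      (\<forall>j\<in>{2..m}. \<forall>x. (\<lambda>t. pds js f (x(j := t)) C) differentiable (at (x j))))"

function cstd :: "nat \<Rightarrow> real" where
  "cstd k = (if k \<le> 1 then - 1 / 2
             else - (1 / 2 ^ k) * (\<Sum>j=1..k div 2. \<Sum>i=1..j.
                      real ((k + 1) choose (2 * j + 1)) * real (j choose i) * cstd (k - i)))"
  by auto
termination
  by (relation "Wellfounded.measure id") auto

end

theory Submission
  imports Defs "HOL-Computational_Algebra.Formal_Power_Series"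
begin

text \<open>For \<open>F = exp(z) H + exp(z\<^sup>-) K\<close> with \<open>H\<close>, \<open>K\<close> depending on \<open>y\<close> only, the rules
  \<open>\<partial>\<^sub>x\<^sub>1 exp(z) = exp(z) e\<^sub>1\<close> and \<open>e\<^sub>j exp(z) = exp(z\<^sup>-) e\<^sub>j\<close> (\<open>j \<ge> 2\<close>) show that the right Dirac
  operator acts on the pair \<open>(H, K)\<close> as \<open>(U H, V K)\<close>, where \<open>V = 1 - E + R\<close> is intertwined with
  \<open>U = 1 + E + R\<close> by \<open>\<partial>\<^sub>y\<close>.  Hence \<open>V\<^sup>n\<close> kills every odd derivative \<open>\<partial>\<^sub>y\<^sup>2\<^sup>k\<^sup>-\<^sup>1 A\<close>, since it is
  \<open>\<partial>\<^sub>y\<^sup>2\<^sup>k\<^sup>-\<^sup>1 U\<^sup>n A = 0\<close>.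

  The left Dirac operator acts as \<open>(H, K) \<mapsto> (\<partial>\<^sub>y K, \<partial>\<^sub>y H + 2 K)\<close>.  From \<open>(1 - E - R) U = -R\<^sup>2\<close> and
  \<open>R\<^sup>2 = -\<Delta>\<^sub>y = \<partial>\<^sub>y\<^sup>2\<close> one gets \<open>\<partial>\<^sub>y\<^sup>2\<^sup>n A = 0\<close>, so on pairs \<open>(p(\<partial>\<^sub>y\<^sup>2) A, q(\<partial>\<^sub>y\<^sup>2) \<partial>\<^sub>y A)\<close> the operator
  becomes \<open>(p, q) \<mapsto> (X q, p + 2 q)\<close> over \<open>\<real>[X]/(X\<^sup>n)\<close>.  The constants \<open>c\<^sub>k\<^sub>+\<^sub>1\<close> are the
  coefficients of the power series root \<open>g\<close> of \<open>1 + 2 g = X g\<^sup>2\<close>, for which \<open>(1, g)\<close> is an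
  eigenvector with eigenvalue \<open>X g\<close>, and \<open>(X g)\<^sup>n\<close> vanishes modulo \<open>X\<^sup>n\<close>.\<close>

section \<open>The Clifford product\<close>

text \<open>Merging the two counts in the exponent of \<open>csign\<close> into one makes it additive, modulo 2,
  in each argument with respect to symmetric difference.\<close>

definition le_pairs :: "nat set \<Rightarrow> nat set \<Rightarrow> nat" where
  "le_pairs A B = (\<Sum>i\<in>A. \<Sum>j\<in>B. if j \<le> i then 1 else 0)"

lemma card_less_pairs_eq_sum:
  assumes "finite A" "finite B"
  shows "card {(i, j). i \<in> A \<and> j \<in> B \<and> j < i} = (\<Sum>i\<in>A. \<Sum>j\<in>B. if j < i then 1 else 0)"
proof -
  have "{(i, j). i \<in> A \<and> j \<in> B \<and> j < i} = (SIGMA i:A. {j\<in>B. j < i})" by auto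
  then have "card {(i, j). i \<in> A \<and> j \<in> B \<and> j < i} = (\<Sum>i\<in>A. card {j\<in>B. j < i})"
    using assms by (simp add: card_SigmaI)
  also have "\<dots> = (\<Sum>i\<in>A. \<Sum>j\<in>B. if j < i then 1 else 0)"
    using assms by (intro sum.cong refl) (simp add: sum.If_cases Int_def)
  finally show ?thesis .
qed

lemma card_Int_eq_sum:
  assumes "finite A" "finite B"
  shows "card (A \<inter> B) = (\<Sum>i\<in>A. \<Sum>j\<in>B. if j = i then 1 else 0)"
proof -
  have "(\<Sum>i\<in>A. \<Sum>j\<in>B. if j = i then 1 else (0::nat)) = (\<Sum>i\<in>A. if i \<in> B then 1 else 0)"
    using assms by (intro sum.cong) (auto simp: sum.delta)
  also have "\<dots> = card (A \<inter> B)" using assms by (simp add: sum.If_cases Int_def)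
  finally show ?thesis by simp
qed

lemma csign_eq_le_pairs:
  assumes "finite A" "finite B"
  shows "csign A B = (-1) ^ le_pairs A B"
proof -
  have "card {(i, j). i \<in> A \<and> j \<in> B \<and> j < i} + card (A \<inter> B) = le_pairs A B"
    unfolding le_pairs_def card_less_pairs_eq_sum[OF assms] card_Int_eq_sum[OF assms]
      sum.distrib[symmetric]
    by (intro sum.cong refl) auto
  then show ?thesis unfolding csign_def by simp
qed

lemma sum_symdiff_add_Int:
  fixes f :: "'a \<Rightarrow> nat"
  assumes "finite A" "finite B"
  shows "sum f ((A - B) \<union> (B - A)) + 2 * sum f (A \<inter> B) = sum f A + sum f B"
proof -
  have "sum f A = sum f (A - B) + sum f (A \<inter> B)"
    using assms(1) sum.Int_Diff[of A f B] by simp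
  moreover have "sum f B = sum f (B - A) + sum f (A \<inter> B)"
    using assms(2) sum.Int_Diff[of B f A] by (simp add: Int_commute)
  moreover have "sum f ((A - B) \<union> (B - A)) = sum f (A - B) + sum f (B - A)"
    using assms by (intro sum.union_disjoint) auto
  ultimately show ?thesis by simp
qed

lemma neg_one_power_eq_if_parity:
  assumes "a + 2 * d = b + (c::nat)"
  shows "((-1::real) ^ a) = (-1) ^ b * (-1) ^ c"
proof -
  have "(-1::real) ^ (a + 2 * d) = (-1) ^ a" by (simp add: power_add power_mult)
  then show ?thesis using assms by (simp only: power_add)
qed

lemma csign_symdiff_left:
  assumes "finite A" "finite B" "finite C"
  shows "csign ((A - B) \<union> (B - A)) C = csign A C * csign B C"
proof -
  let ?g = "\<lambda>i. \<Sum>j\<in>C. if j \<le> i then 1 else (0::nat)"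
  have "le_pairs ((A - B) \<union> (B - A)) C + 2 * sum ?g (A \<inter> B) = le_pairs A C + le_pairs B C"
    unfolding le_pairs_def using sum_symdiff_add_Int[OF assms(1,2), of ?g] by simp
  moreover have "finite ((A - B) \<union> (B - A))" using assms by simp
  ultimately show ?thesis
    using assms neg_one_power_eq_if_parity by (metis csign_eq_le_pairs)
qed

lemma csign_symdiff_right:
  assumes "finite A" "finite B" "finite C"
  shows "csign A ((B - C) \<union> (C - B)) = csign A B * csign A C"
proof -
  have "le_pairs A ((B - C) \<union> (C - B)) + 2 * le_pairs A (B \<inter> C) = le_pairs A B + le_pairs A C"
    unfolding le_pairs_def sum_distrib_left sum.distrib[symmetric]
    using sum_symdiff_add_Int[OF assms(2,3)] by (simp add: sum_distrib_left)
  moreover have "finite ((B - C) \<union> (C - B))" using assms by simp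
  ultimately show ?thesis
    using assms neg_one_power_eq_if_parity by (metis csign_eq_le_pairs)
qed

text \<open>The cocycle identity of the sign: it is exactly associativity on blades,
  \<open>(e\<^sub>A e\<^sub>B) e\<^sub>E = e\<^sub>A (e\<^sub>B e\<^sub>E)\<close>.\<close>

lemma csign_cocycle:
  assumes "finite A" "finite B" "finite E"
  shows "csign ((A - B) \<union> (B - A)) E * csign A B = csign A ((B - E) \<union> (E - B)) * csign B E"
  using csign_symdiff_left[OF assms] csign_symdiff_right[OF assms] by simp

lemma sum_rotate3:
  "(\<Sum>x\<in>X. \<Sum>y\<in>Y. \<Sum>z\<in>Z. g x y z) = (\<Sum>y\<in>Y. \<Sum>z\<in>Z. \<Sum>x\<in>X. g x y z)"
  by (rule trans[OF sum.swap], rule sum.cong[OF refl], rule sum.swap)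

lemma clmul_clmul_left_expand:
  fixes m :: nat
  defines "P \<equiv> Pow {1..m}" and "sd \<equiv> \<lambda>A B. (A - B) \<union> (B - A)"
  shows "clmul m (clmul m a b) c C = (\<Sum>A\<in>P. \<Sum>B\<in>P. \<Sum>E\<in>P.
    if sd (sd A B) E = C then csign (sd A B) E * csign A B * a A * b B * c E else 0)"
proof -
  have sd_Pow: "sd A B \<in> P" if "A \<in> P" "B \<in> P" for A B
    using that unfolding P_def sd_def by auto
  have expand: "(if q then s * (\<Sum>A\<in>X. \<Sum>B\<in>Y. f A B) * w else 0) =
      (\<Sum>A\<in>X. \<Sum>B\<in>Y. if q then s * f A B * w else (0::real))" for q s w X Y f
    by (cases q) (simp_all add: sum_distrib_left sum_distrib_right)
  have nest: "(if q then s * (if r then v else 0) * w else (0::real)) =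
      (if r then (if q then s * v * w else 0) else 0)" for q r s v w
    by simp
  have "clmul m (clmul m a b) c C = (\<Sum>D\<in>P. \<Sum>E\<in>P. \<Sum>A\<in>P. \<Sum>B\<in>P.
       if sd A B = D then (if sd D E = C then csign D E * csign A B * a A * b B * c E else 0) else 0)"
    unfolding clmul_def P_def sd_def by (unfold expand nest) (simp only: mult.assoc)
  also have "\<dots> = (\<Sum>E\<in>P. \<Sum>A\<in>P. \<Sum>B\<in>P. \<Sum>D\<in>P.
       if sd A B = D then (if sd D E = C then csign D E * csign A B * a A * b B * c E else 0) else 0)"
    by (rule trans[OF sum.swap], rule sum.cong[OF refl], rule sum_rotate3)
  also have "\<dots> = (\<Sum>E\<in>P. \<Sum>A\<in>P. \<Sum>B\<in>P.
       if sd (sd A B) E = C then csign (sd A B) E * csign A B * a A * b B * c E else 0)"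
    using sd_Pow by (intro sum.cong refl) (simp only: P_def sum.delta' finite_Pow_iff finite_atLeastAtMost if_True)
  also have "\<dots> = (\<Sum>A\<in>P. \<Sum>B\<in>P. \<Sum>E\<in>P.
       if sd (sd A B) E = C then csign (sd A B) E * csign A B * a A * b B * c E else 0)"
    by (rule sum_rotate3)
  finally show ?thesis .
qed

lemma clmul_clmul_right_expand:
  fixes m :: nat
  defines "P \<equiv> Pow {1..m}" and "sd \<equiv> \<lambda>A B. (A - B) \<union> (B - A)"
  shows "clmul m a (clmul m b c) C = (\<Sum>A\<in>P. \<Sum>B\<in>P. \<Sum>E\<in>P.
    if sd A (sd B E) = C then csign A (sd B E) * csign B E * a A * b B * c E else 0)"
proof -
  have sd_Pow: "sd A B \<in> P" if "A \<in> P" "B \<in> P" for A B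
    using that unfolding P_def sd_def by auto
  have expand: "(if q then s * v * (\<Sum>A\<in>X. \<Sum>B\<in>Y. f A B) else 0) =
      (\<Sum>A\<in>X. \<Sum>B\<in>Y. if q then s * v * f A B else (0::real))" for q s v X Y f
    by (cases q) (simp_all add: sum_distrib_left sum_distrib_right)
  have nest: "(if q then s * u * (if r then v else 0) else (0::real)) =
      (if r then (if q then s * u * v else 0) else 0)" for q r s u v
    by simp
  have "clmul m a (clmul m b c) C = (\<Sum>A\<in>P. \<Sum>F\<in>P. \<Sum>B\<in>P. \<Sum>E\<in>P.
       if sd B E = F then (if sd A F = C then csign A F * a A * (csign B E * b B * c E) else 0) else 0)"
    unfolding clmul_def P_def sd_def by (unfold expand nest) (simp only: mult.assoc)
  also have "\<dots> = (\<Sum>A\<in>P. \<Sum>B\<in>P. \<Sum>E\<in>P. \<Sum>F\<in>P.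
       if sd B E = F then (if sd A F = C then csign A F * a A * (csign B E * b B * c E) else 0) else 0)"
    by (rule sum.cong[OF refl], rule sum_rotate3)
  also have "\<dots> = (\<Sum>A\<in>P. \<Sum>B\<in>P. \<Sum>E\<in>P.
       if sd A (sd B E) = C then csign A (sd B E) * csign B E * a A * b B * c E else 0)"
    using sd_Pow by (intro sum.cong refl)
      (simp only: P_def sum.delta' finite_Pow_iff finite_atLeastAtMost if_True mult_ac)
  finally show ?thesis .
qed

lemma clmul_assoc: "clmul m (clmul m a b) c = clmul m a (clmul m b c)"
proof
  fix C
  let ?sd = "\<lambda>A B. (A - B) \<union> (B - A)"
  show "clmul m (clmul m a b) c C = clmul m a (clmul m b c) C"
    unfolding clmul_clmul_left_expand clmul_clmul_right_expand
  proof (intro sum.cong refl)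
    fix A B E assume "A \<in> Pow {1..m}" "B \<in> Pow {1..m}" "E \<in> Pow {1..m}"
    then have "finite A" "finite B" "finite E" by (auto intro: finite_subset)
    moreover have "?sd (?sd A B) E = ?sd A (?sd B E)" by auto
    ultimately show "(if ?sd (?sd A B) E = C then csign (?sd A B) E * csign A B * a A * b B * c E else 0) =
        (if ?sd A (?sd B E) = C then csign A (?sd B E) * csign B E * a A * b B * c E else 0)"
      using csign_cocycle by simp
  qed
qed

definition clif_elem :: "nat \<Rightarrow> clif \<Rightarrow> bool" where
  "clif_elem m a \<longleftrightarrow> (\<forall>C. \<not> C \<subseteq> {1..m} \<longrightarrow> a C = 0)"

definition clone :: clif where
  "clone = (\<lambda>C. if C = {} then 1 else 0)"

definition blade_coeff :: "nat set \<Rightarrow> nat set \<Rightarrow> nat set \<Rightarrow> real" where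
  "blade_coeff A B D = (if (A - B) \<union> (B - A) = D then csign A B else 0)"

lemma clmul_eq_blade_coeff:
  "clmul m a b D = (\<Sum>A\<in>Pow {1..m}. \<Sum>B\<in>Pow {1..m}. blade_coeff A B D * a A * b B)"
  unfolding clmul_def blade_coeff_def by (intro sum.cong refl) simp

lemma clif_elem_clmul: "clif_elem m (clmul m a b)"
  unfolding clif_elem_def
proof (intro allI impI)
  fix C assume "\<not> C \<subseteq> {1..m}"
  then have "\<forall>A\<in>Pow {1..m}. \<forall>B\<in>Pow {1..m}. (A - B) \<union> (B - A) \<noteq> C" by blast
  then show "clmul m a b C = 0" unfolding clmul_def by simp
qed

lemma clmul_add_left: "clmul m (\<lambda>C. a C + b C) c = (\<lambda>D. clmul m a c D + clmul m b c D)"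
  unfolding clmul_eq_blade_coeff by (simp add: sum.distrib[symmetric] ring_distribs)

lemma clmul_add_right: "clmul m a (\<lambda>C. b C + c C) = (\<lambda>D. clmul m a b D + clmul m a c D)"
  unfolding clmul_eq_blade_coeff by (simp add: sum.distrib[symmetric] ring_distribs)

lemma clmul_diff_left: "clmul m (\<lambda>C. a C - b C) c = (\<lambda>D. clmul m a c D - clmul m b c D)"
  unfolding clmul_eq_blade_coeff by (simp add: sum_subtractf[symmetric] ring_distribs)

lemma clmul_diff_right: "clmul m a (\<lambda>C. b C - c C) = (\<lambda>D. clmul m a b D - clmul m a c D)"
  unfolding clmul_eq_blade_coeff by (simp add: sum_subtractf[symmetric] ring_distribs)

lemma clmul_scale_left: "clmul m (\<lambda>C. r * a C) c = (\<lambda>D. r * clmul m a c D)"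
  unfolding clmul_eq_blade_coeff by (simp add: sum_distrib_left mult_ac)

lemma clmul_scale_right: "clmul m a (\<lambda>C. r * c C) = (\<lambda>D. r * clmul m a c D)"
  unfolding clmul_eq_blade_coeff by (simp add: sum_distrib_left mult_ac)

lemma clmul_neg_left: "clmul m (\<lambda>C. - a C) c = (\<lambda>D. - clmul m a c D)"
  using clmul_scale_left[of m "-1" a c] by simp

lemma clmul_neg_right: "clmul m a (\<lambda>C. - c C) = (\<lambda>D. - clmul m a c D)"
  using clmul_scale_right[of m a "-1" c] by simp

lemma clmul_zero_left: "clmul m (\<lambda>C. 0) c = (\<lambda>D. 0)"
  unfolding clmul_eq_blade_coeff by simp

lemma clmul_zero_right: "clmul m a (\<lambda>C. 0) = (\<lambda>D. 0)"
  unfolding clmul_eq_blade_coeff by simp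

lemma clmul_sum_left: "clmul m (\<lambda>C. \<Sum>i\<in>I. f i C) c = (\<lambda>D. \<Sum>i\<in>I. clmul m (f i) c D)"
proof (cases "finite I")
  case True then show ?thesis
    by (induction I rule: finite_induct) (simp_all add: clmul_add_left clmul_zero_left)
qed (simp add: clmul_zero_left)

lemma clmul_sum_right: "clmul m a (\<lambda>C. \<Sum>i\<in>I. f i C) = (\<lambda>D. \<Sum>i\<in>I. clmul m a (f i) D)"
proof (cases "finite I")
  case True then show ?thesis
    by (induction I rule: finite_induct) (simp_all add: clmul_add_right clmul_zero_right)
qed (simp add: clmul_zero_right)

lemma clmul_clone_left:
  assumes "clif_elem m a"
  shows "clmul m clone a = a"
proof
  fix D
  have "clmul m clone a D =
      (\<Sum>A\<in>Pow {1..m}. if A = {} then (\<Sum>B\<in>Pow {1..m}. blade_coeff {} B D * a B) else 0)"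
    unfolding clmul_eq_blade_coeff by (intro sum.cong refl) (simp add: clone_def)
  also have "\<dots> = (\<Sum>B\<in>Pow {1..m}. blade_coeff {} B D * a B)" by simp
  also have "\<dots> = (\<Sum>B\<in>Pow {1..m}. if B = D then a B else 0)"
    by (intro sum.cong refl) (simp add: blade_coeff_def csign_def)
  also have "\<dots> = a D" using assms by (auto simp: clif_elem_def)
  finally show "clmul m clone a D = a D" .
qed

lemma clmul_clone_right:
  assumes "clif_elem m a"
  shows "clmul m a clone = a"
proof
  fix D
  have "clmul m a clone D =
      (\<Sum>A\<in>Pow {1..m}. \<Sum>B\<in>Pow {1..m}. if B = {} then blade_coeff A {} D * a A else 0)"
    unfolding clmul_eq_blade_coeff by (intro sum.cong refl) (simp add: clone_def)
  also have "\<dots> = (\<Sum>A\<in>Pow {1..m}. blade_coeff A {} D * a A)" by simp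
  also have "\<dots> = (\<Sum>A\<in>Pow {1..m}. if A = D then a A else 0)"
    by (intro sum.cong refl) (simp add: blade_coeff_def csign_def)
  also have "\<dots> = a D" using assms by (auto simp: clif_elem_def)
  finally show "clmul m a clone D = a D" .
qed

lemma clmul_gen_gen:
  assumes "j \<in> {1..m}" "k \<in> {1..m}"
  shows "clmul m (gen j) (gen k) D = blade_coeff {j} {k} D"
proof -
  have "clmul m (gen j) (gen k) D = (\<Sum>A\<in>Pow {1..m}. if A = {j} then
          (\<Sum>B\<in>Pow {1..m}. if B = {k} then blade_coeff {j} {k} D else 0) else 0)"
    unfolding clmul_eq_blade_coeff
  proof (intro sum.cong refl)
    fix A
    have "blade_coeff A B D * gen j A * gen k B =
        (if A = {j} then if B = {k} then blade_coeff {j} {k} D else 0 else 0)" for B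
      by (simp add: gen_def)
    then show "(\<Sum>B\<in>Pow {1..m}. blade_coeff A B D * gen j A * gen k B) =
      (if A = {j} then \<Sum>B\<in>Pow {1..m}. if B = {k} then blade_coeff {j} {k} D else 0 else 0)"
      by simp
  qed
  also have "\<dots> = blade_coeff {j} {k} D"
    using assms by (simp only: sum.delta finite_Pow_iff finite_atLeastAtMost) simp
  finally show ?thesis .
qed

lemma csign_singleton_self: "csign {j} {j} = -1"
proof -
  have "{(i, l). i \<in> {j} \<and> l \<in> {j} \<and> l < i} = {}" by auto
  then show ?thesis by (simp only: csign_def) simp
qed

lemma csign_singletons:
  assumes "j < k"
  shows "csign {j} {k} = 1" and "csign {k} {j} = -1"
proof -
  have "{(i, l). i \<in> {j} \<and> l \<in> {k} \<and> l < i} = {}"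
    and "{(i, l). i \<in> {k} \<and> l \<in> {j} \<and> l < i} = {(k, j)}"
    using assms by auto
  then show "csign {j} {k} = 1" and "csign {k} {j} = -1"
    using assms by (simp_all only: csign_def) simp_all
qed

lemma gen_mult_self: "j \<in> {1..m} \<Longrightarrow> clmul m (gen j) (gen j) = (\<lambda>C. - clone C)"
  by (rule ext) (simp add: clmul_gen_gen blade_coeff_def csign_singleton_self clone_def)

lemma gen_anticomm:
  assumes "j \<in> {1..m}" "k \<in> {1..m}" "j \<noteq> k"
  shows "clmul m (gen j) (gen k) = (\<lambda>C. - clmul m (gen k) (gen j) C)"
proof
  fix D
  have "csign {j} {k} = - csign {k} {j}"
    using assms(3) csign_singletons[of j k] csign_singletons[of k j] by (cases "j < k") auto
  moreover have "{k, j} = {j, k}" by auto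
  ultimately show "clmul m (gen j) (gen k) D = - clmul m (gen k) (gen j) D"
    using assms by (simp add: clmul_gen_gen blade_coeff_def)
qed

lemma clif_elem_gen: "j \<in> {1..m} \<Longrightarrow> clif_elem m (gen j)"
  by (auto simp: clif_elem_def gen_def)

lemma gen_mult_gen_mult:
  "j \<in> {1..m} \<Longrightarrow> clif_elem m a \<Longrightarrow> clmul m (gen j) (clmul m (gen j) a) = (\<lambda>D. - a D)"
  by (simp add: clmul_assoc[symmetric] gen_mult_self clmul_neg_left clmul_clone_left)

lemma gen1_sandwich_twice:
  assumes "m \<ge> 1" "clif_elem m a"
  shows "clmul m (clmul m (gen 1) (clmul m (clmul m (gen 1) a) (gen 1))) (gen 1) = a"
proof -
  have "1 \<in> {1..m}" using assms(1) by simp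
  then show ?thesis
    using assms(2) by (simp add: clmul_assoc gen_mult_self clmul_neg_right clmul_neg_left
        clmul_clone_right gen_mult_gen_mult clif_elem_clmul)
qed

lemma gen_mult_gen1_sandwich:
  assumes "m \<ge> 1" "j \<in> {2..m}"
  shows "clmul m (gen j) (clmul m (clmul m (gen 1) a) (gen 1)) =
         (\<lambda>D. - clmul m (clmul m (gen 1) (clmul m (gen j) a)) (gen 1) D)"
proof -
  have "clmul m (gen j) (gen 1) = (\<lambda>C. - clmul m (gen 1) (gen j) C)"
    using assms by (intro gen_anticomm) auto
  then show ?thesis
    by (simp add: clmul_assoc[symmetric]) (simp add: clmul_neg_left clmul_assoc)
qed

lemma gen1_sandwich_mult_gen:
  assumes "m \<ge> 1" "j \<in> {2..m}"
  shows "clmul m (clmul m (clmul m (gen 1) a) (gen 1)) (gen j) =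
         (\<lambda>D. - clmul m (clmul m (gen 1) (clmul m a (gen j))) (gen 1) D)"
proof -
  have "clmul m (gen 1) (gen j) = (\<lambda>C. - clmul m (gen j) (gen 1) C)"
    using assms by (intro gen_anticomm) auto
  then show ?thesis
    by (simp add: clmul_assoc) (simp add: clmul_neg_right clmul_assoc[symmetric])
qed

lemma clifford_relation_right:
  assumes "j \<in> {1..m}" "k \<in> {1..m}" "clif_elem m a"
  shows "clmul m (clmul m a (gen j)) (gen k) D + clmul m (clmul m a (gen k)) (gen j) D =
         (if j = k then - 2 * a D else 0)"
proof (cases "j = k")
  case True
  then show ?thesis using assms by (simp add: clmul_assoc gen_mult_self clmul_neg_right clmul_clone_right)
next
  case False
  then show ?thesis using assms by (simp add: clmul_assoc gen_anticomm[of k m j] clmul_neg_right)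
qed

lemma clifford_relation_left:
  assumes "j \<in> {1..m}" "k \<in> {1..m}" "clif_elem m a"
  shows "clmul m (gen k) (clmul m (gen j) a) D + clmul m (gen j) (clmul m (gen k) a) D =
         (if j = k then - 2 * a D else 0)"
proof (cases "j = k")
  case True
  then show ?thesis
    using assms by (simp add: clmul_assoc[symmetric] gen_mult_self clmul_neg_left clmul_clone_left)
next
  case False
  then show ?thesis
    using assms by (simp add: clmul_assoc[symmetric] gen_anticomm[of k m j] clmul_neg_left)
qed

section \<open>Partial derivatives in the variables \<open>x\<^sub>2, \<dots>, x\<^sub>m\<close>\<close>

definition rpd :: "nat \<Rightarrow> ((nat \<Rightarrow> real) \<Rightarrow> real) \<Rightarrow> (nat \<Rightarrow> real) \<Rightarrow> real" where
  "rpd j \<phi> x = deriv (\<lambda>t. \<phi> (x(j := t))) (x j)"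

fun rpds :: "nat list \<Rightarrow> ((nat \<Rightarrow> real) \<Rightarrow> real) \<Rightarrow> (nat \<Rightarrow> real) \<Rightarrow> real" where
  "rpds [] \<phi> = \<phi>"
| "rpds (j # js) \<phi> = rpd j (rpds js \<phi>)"

definition rpd_differentiable :: "nat \<Rightarrow> ((nat \<Rightarrow> real) \<Rightarrow> real) \<Rightarrow> bool" where
  "rpd_differentiable j \<phi> \<longleftrightarrow> (\<forall>x. (\<lambda>t. \<phi> (x(j := t))) differentiable (at (x j)))"

definition smooth_y_real :: "nat \<Rightarrow> ((nat \<Rightarrow> real) \<Rightarrow> real) \<Rightarrow> bool" where
  "smooth_y_real m \<phi> \<longleftrightarrow> (\<forall>js\<in>lists {2..m}. continuous_on UNIV (rpds js \<phi>) \<and>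
      (\<forall>j\<in>{2..m}. rpd_differentiable j (rpds js \<phi>)))"

lemma pd_eq_rpd: "pd j f x C = rpd j (\<lambda>x. f x C) x"
  by (simp add: pd_def rpd_def)

lemma pds_eq_rpds: "pds js f x C = rpds js (\<lambda>x. f x C) x"
proof -
  have "(\<lambda>x. pds js f x C) = rpds js (\<lambda>x. f x C)"
    by (induction js) (simp_all add: pd_eq_rpd)
  then show ?thesis by (metis (no_types))
qed

lemma smooth_y_iff_real: "smooth_y m f \<longleftrightarrow> (\<forall>C. smooth_y_real m (\<lambda>x. f x C))"
  unfolding smooth_y_def smooth_y_real_def rpd_differentiable_def pds_eq_rpds by blast

lemma rpd_has_derivative_at:
  assumes "rpd_differentiable j \<phi>"
  shows "((\<lambda>t. \<phi> (x(j := t))) has_real_derivative rpd j \<phi> (x(j := s))) (at s)"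
proof -
  have "(\<lambda>t. \<phi> ((x(j := s))(j := t))) differentiable (at ((x(j := s)) j))"
    using assms unfolding rpd_differentiable_def by blast
  then have "(\<lambda>t. \<phi> (x(j := t))) differentiable (at s)" by simp
  then show ?thesis
    unfolding rpd_def using DERIV_deriv_iff_real_differentiable by fastforce
qed

lemma rpd_has_derivative:
  "rpd_differentiable j \<phi> \<Longrightarrow> ((\<lambda>t. \<phi> (x(j := t))) has_real_derivative rpd j \<phi> x) (at (x j))"
  using rpd_has_derivative_at[of j \<phi> x "x j"] by simp

lemma rpd_lincomb:
  assumes "finite I" "\<And>i. i \<in> I \<Longrightarrow> rpd_differentiable j (\<phi> i)"
  shows "rpd j (\<lambda>x. \<Sum>i\<in>I. a i * \<phi> i x) = (\<lambda>x. \<Sum>i\<in>I. a i * rpd j (\<phi> i) x)"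
proof
  fix x
  have "((\<lambda>t. \<Sum>i\<in>I. a i * \<phi> i (x(j := t))) has_real_derivative
      (\<Sum>i\<in>I. a i * rpd j (\<phi> i) x)) (at (x j))"
    by (intro DERIV_sum DERIV_cmult rpd_has_derivative assms)
  then show "rpd j (\<lambda>x. \<Sum>i\<in>I. a i * \<phi> i x) x = (\<Sum>i\<in>I. a i * rpd j (\<phi> i) x)"
    unfolding rpd_def by (rule DERIV_imp_deriv)
qed

lemma rpd_differentiable_lincomb:
  assumes "finite I" "\<And>i. i \<in> I \<Longrightarrow> rpd_differentiable j (\<phi> i)"
  shows "rpd_differentiable j (\<lambda>x. \<Sum>i\<in>I. a i * \<phi> i x)"
  unfolding rpd_differentiable_def
proof
  fix x
  have "((\<lambda>t. \<Sum>i\<in>I. a i * \<phi> i (x(j := t))) has_real_derivative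
      (\<Sum>i\<in>I. a i * rpd j (\<phi> i) x)) (at (x j))"
    by (intro DERIV_sum DERIV_cmult rpd_has_derivative assms)
  then show "(\<lambda>t. \<Sum>i\<in>I. a i * \<phi> i (x(j := t))) differentiable at (x j)"
    using real_differentiable_def by blast
qed

lemma rpds_lincomb:
  assumes "finite I" "\<And>i. i \<in> I \<Longrightarrow> smooth_y_real m (\<phi> i)" "js \<in> lists {2..m}"
  shows "rpds js (\<lambda>x. \<Sum>i\<in>I. a i * \<phi> i x) = (\<lambda>x. \<Sum>i\<in>I. a i * rpds js (\<phi> i) x)"
  using assms(3)
proof (induction js)
  case Nil then show ?case by simp
next
  case (Cons j js)
  then have "js \<in> lists {2..m}" "j \<in> {2..m}" by auto
  then have "rpd_differentiable j (rpds js (\<phi> i))" if "i \<in> I" for i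
    using assms(2)[OF that] unfolding smooth_y_real_def by blast
  then show ?case using Cons by (simp add: rpd_lincomb assms(1))
qed

lemma smooth_y_real_lincomb:
  assumes "finite I" "\<And>i. i \<in> I \<Longrightarrow> smooth_y_real m (\<phi> i)"
  shows "smooth_y_real m (\<lambda>x. \<Sum>i\<in>I. a i * \<phi> i x)"
  unfolding smooth_y_real_def
proof (intro ballI conjI)
  fix js assume js: "js \<in> lists {2..m}"
  have eq: "rpds js (\<lambda>x. \<Sum>i\<in>I. a i * \<phi> i x) = (\<lambda>x. \<Sum>i\<in>I. a i * rpds js (\<phi> i) x)"
    by (rule rpds_lincomb[OF assms js])
  have "continuous_on UNIV (rpds js (\<phi> i))" if "i \<in> I" for i
    using assms(2)[OF that] js unfolding smooth_y_real_def by blast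
  then show "continuous_on UNIV (rpds js (\<lambda>x. \<Sum>i\<in>I. a i * \<phi> i x))"
    unfolding eq by (intro continuous_intros) auto
  fix j assume "j \<in> {2..m}"
  then show "rpd_differentiable j (rpds js (\<lambda>x. \<Sum>i\<in>I. a i * \<phi> i x))"
    unfolding eq using assms(2) js unfolding smooth_y_real_def
    by (intro rpd_differentiable_lincomb assms(1)) auto
qed

lemma rpds_append: "rpds js (rpd j \<phi>) = rpds (js @ [j]) \<phi>"
  by (induction js) auto

lemma smooth_y_real_rpd: "smooth_y_real m \<phi> \<Longrightarrow> j \<in> {2..m} \<Longrightarrow> smooth_y_real m (rpd j \<phi>)"
  unfolding smooth_y_real_def rpds_append by auto

lemma smooth_y_real_rpd_differentiable:
  "smooth_y_real m \<phi> \<Longrightarrow> j \<in> {2..m} \<Longrightarrow> rpd_differentiable j \<phi>"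
  unfolding smooth_y_real_def by (metis lists.Nil rpds.simps(1))

lemma isCont_pair_eps_delta:
  fixes q :: "real \<Rightarrow> real \<Rightarrow> real"
  assumes "isCont (\<lambda>z. q (fst z) (snd z)) (s0, t0)" "e > 0"
  shows "\<exists>d>0. \<forall>s t. \<bar>s - s0\<bar> < d \<and> \<bar>t - t0\<bar> < d \<longrightarrow> \<bar>q s t - q s0 t0\<bar> < e"
proof -
  have "\<exists>d>0. \<forall>z. dist z (s0, t0) < d \<longrightarrow> dist (q (fst z) (snd z)) (q s0 t0) < e"
    using assms unfolding continuous_at_eps_delta by simp
  then obtain d where d: "d > 0" "\<And>z. dist z (s0, t0) < d \<Longrightarrow> dist (q (fst z) (snd z)) (q s0 t0) < e"
    by blast
  have "\<bar>q s t - q s0 t0\<bar> < e" if "\<bar>s - s0\<bar> < d / 2" "\<bar>t - t0\<bar> < d / 2" for s t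
  proof -
    have "dist (s, t) (s0, t0) \<le> \<bar>s - s0\<bar> + \<bar>t - t0\<bar>"
      unfolding dist_Pair_Pair dist_real_def
      using sqrt_sum_squares_le_sum_abs[of "\<bar>s - s0\<bar>" "\<bar>t - t0\<bar>"] by simp
    then show ?thesis using d(2)[of "(s, t)"] that by (simp add: dist_real_def)
  qed
  then show ?thesis using d(1) by (intro exI[of _ "d / 2"]) auto
qed

text \<open>Clairaut--Schwarz: both mixed second differences of \<open>p\<close> over the square of side \<open>h\<close>
  equal \<open>h\<^sup>2\<close> times a mixed partial at some point of the square (two applications of the mean
  value theorem each), and letting \<open>h \<rightarrow> 0\<close> the continuity of the mixed partials at
  \<open>(s\<^sub>0, t\<^sub>0)\<close> forces them to agree there.\<close>

lemma mixed_partials_eq: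
  fixes p ps pt pst pts :: "real \<Rightarrow> real \<Rightarrow> real"
  assumes ds: "\<And>s t. ((\<lambda>s. p s t) has_real_derivative ps s t) (at s)"
    and dt: "\<And>s t. ((\<lambda>t. p s t) has_real_derivative pt s t) (at t)"
    and dst: "\<And>s t. ((\<lambda>t. ps s t) has_real_derivative pst s t) (at t)"
    and dts: "\<And>s t. ((\<lambda>s. pt s t) has_real_derivative pts s t) (at s)"
    and cont_st: "isCont (\<lambda>z. pst (fst z) (snd z)) (s0, t0)"
    and cont_ts: "isCont (\<lambda>z. pts (fst z) (snd z)) (s0, t0)"
  shows "pst s0 t0 = pts s0 t0"
proof (rule ccontr)
  assume ne: "pst s0 t0 \<noteq> pts s0 t0"
  define e where "e = \<bar>pst s0 t0 - pts s0 t0\<bar> / 2"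
  have e: "e > 0" using ne by (simp add: e_def)
  obtain d1 where d1: "d1 > 0" "\<forall>s t. \<bar>s - s0\<bar> < d1 \<and> \<bar>t - t0\<bar> < d1 \<longrightarrow> \<bar>pst s t - pst s0 t0\<bar> < e"
    using isCont_pair_eps_delta[OF cont_st e] by blast
  obtain d2 where d2: "d2 > 0" "\<forall>s t. \<bar>s - s0\<bar> < d2 \<and> \<bar>t - t0\<bar> < d2 \<longrightarrow> \<bar>pts s t - pts s0 t0\<bar> < e"
    using isCont_pair_eps_delta[OF cont_ts e] by blast
  define h where "h = min d1 d2 / 2"
  have h: "h > 0" "h < d1" "h < d2" using d1 d2 by (auto simp: h_def)
  obtain xi where xi: "s0 < xi" "xi < s0 + h"
    "(p (s0 + h) (t0 + h) - p (s0 + h) t0) - (p s0 (t0 + h) - p s0 t0) = h * (ps xi (t0 + h) - ps xi t0)"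
    using MVT2[of s0 "s0 + h" "\<lambda>s. p s (t0 + h) - p s t0" "\<lambda>s. ps s (t0 + h) - ps s t0",
      OF _ DERIV_diff[OF ds ds]] h(1) by auto
  obtain eta where eta: "t0 < eta" "eta < t0 + h" "ps xi (t0 + h) - ps xi t0 = h * pst xi eta"
    using MVT2[of t0 "t0 + h" "\<lambda>t. ps xi t" "\<lambda>t. pst xi t"] h(1) dst by auto
  obtain eta' where eta': "t0 < eta'" "eta' < t0 + h"
    "(p (s0 + h) (t0 + h) - p s0 (t0 + h)) - (p (s0 + h) t0 - p s0 t0) = h * (pt (s0 + h) eta' - pt s0 eta')"
    using MVT2[of t0 "t0 + h" "\<lambda>t. p (s0 + h) t - p s0 t" "\<lambda>t. pt (s0 + h) t - pt s0 t",
      OF _ DERIV_diff[OF dt dt]] h(1) by auto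
  obtain xi' where xi': "s0 < xi'" "xi' < s0 + h" "pt (s0 + h) eta' - pt s0 eta' = h * pts xi' eta'"
    using MVT2[of s0 "s0 + h" "\<lambda>s. pt s eta'" "\<lambda>s. pts s eta'"] h(1) dts by auto
  have "h * (h * pst xi eta) = h * (h * pts xi' eta')"
    using xi(3) eta(3) eta'(3) xi'(3) by (simp add: algebra_simps)
  then have eq: "pst xi eta = pts xi' eta'" using h(1) by simp
  have "\<bar>pst xi eta - pst s0 t0\<bar> < e" using d1(2) xi eta h by auto
  moreover have "\<bar>pts xi' eta' - pts s0 t0\<bar> < e" using d2(2) xi' eta' h by auto
  ultimately have "\<bar>pst s0 t0 - pts s0 t0\<bar> < 2 * e" using eq by linarith
  then show False by (simp add: e_def)
qed

lemma continuous_on_restrict_two_coords: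
  assumes "continuous_on UNIV (\<psi> :: (nat \<Rightarrow> real) \<Rightarrow> real)"
  shows "continuous_on UNIV (\<lambda>z. \<psi> (x(i := fst z, j := snd z)))"
proof -
  have "continuous_on UNIV (\<lambda>z::real \<times> real. x(i := fst z, j := snd z))"
  proof (rule continuous_on_coordinatewise_then_product)
    fix k
    show "continuous_on UNIV (\<lambda>z::real \<times> real. (x(i := fst z, j := snd z)) k)"
      by (cases "k = j"; cases "k = i") (auto intro!: continuous_intros)
  qed
  then show ?thesis using continuous_on_compose2[OF assms] by auto
qed

lemma rpd_commute:
  assumes "smooth_y_real m \<phi>" "i \<in> {2..m}" "j \<in> {2..m}"
  shows "rpd i (rpd j \<phi>) = rpd j (rpd i \<phi>)"
proof (cases "i = j")
  case ne: False
  show ?thesis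
  proof
    fix x
    define p where "p s t = \<phi> (x(i := s, j := t))" for s t
    define ps where "ps s t = rpd i \<phi> (x(i := s, j := t))" for s t
    define pt where "pt s t = rpd j \<phi> (x(i := s, j := t))" for s t
    define pst where "pst s t = rpd j (rpd i \<phi>) (x(i := s, j := t))" for s t
    define pts where "pts s t = rpd i (rpd j \<phi>) (x(i := s, j := t))" for s t
    have diff: "rpd_differentiable i \<phi>" "rpd_differentiable j \<phi>"
      "rpd_differentiable j (rpd i \<phi>)" "rpd_differentiable i (rpd j \<phi>)"
      using assms smooth_y_real_rpd_differentiable smooth_y_real_rpd by blast+
    have ds: "((\<lambda>s. p s t) has_real_derivative ps s t) (at s)" for s t
      using rpd_has_derivative_at[OF diff(1), of "x(j := t)" s] ne unfolding p_def ps_def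
      by (simp add: fun_upd_twist)
    have dt: "((\<lambda>t. p s t) has_real_derivative pt s t) (at t)" for s t
      using rpd_has_derivative_at[OF diff(2), of "x(i := s)" t] unfolding p_def pt_def by simp
    have dst: "((\<lambda>t. ps s t) has_real_derivative pst s t) (at t)" for s t
      using rpd_has_derivative_at[OF diff(3), of "x(i := s)" t] unfolding ps_def pst_def by simp
    have dts: "((\<lambda>s. pt s t) has_real_derivative pts s t) (at s)" for s t
      using rpd_has_derivative_at[OF diff(4), of "x(j := t)" s] ne unfolding pt_def pts_def
      by (simp add: fun_upd_twist)
    have "continuous_on UNIV (rpd j (rpd i \<phi>))" "continuous_on UNIV (rpd i (rpd j \<phi>))"
      using assms unfolding smooth_y_real_def by (metis lists.Cons lists.Nil rpds.simps)+
    then have "continuous_on UNIV (\<lambda>z. pst (fst z) (snd z))" "continuous_on UNIV (\<lambda>z. pts (fst z) (snd z))"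
      unfolding pst_def pts_def by (auto intro: continuous_on_restrict_two_coords)
    then have "isCont (\<lambda>z. pst (fst z) (snd z)) (x i, x j)" "isCont (\<lambda>z. pts (fst z) (snd z)) (x i, x j)"
      by (simp_all add: continuous_on_eq_continuous_at)
    then have "pst (x i) (x j) = pts (x i) (x j)"
      by (rule mixed_partials_eq[OF ds dt dst dts])
    then show "rpd i (rpd j \<phi>) x = rpd j (rpd i \<phi>) x"
      unfolding pst_def pts_def by simp
  qed
qed simp

section \<open>Admissible functions\<close>

definition admissible :: "nat \<Rightarrow> ((nat \<Rightarrow> real) \<Rightarrow> clif) \<Rightarrow> bool" where
  "admissible m f \<longleftrightarrow> clif_valued m f \<and> depends_on_y m f \<and> smooth_y m f"

lemma admissibleI:
  assumes "\<And>x. clif_elem m (f x)"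
    and "\<And>x x'. \<forall>j\<in>{2..m}. x j = x' j \<Longrightarrow> f x = f x'"
    and "\<And>C. smooth_y_real m (\<lambda>x. f x C)"
  shows "admissible m f"
  using assms unfolding admissible_def clif_valued_def depends_on_y_def clif_elem_def smooth_y_iff_real
  by blast

lemma admissible_clif_elem: "admissible m f \<Longrightarrow> clif_elem m (f x)"
  unfolding admissible_def clif_valued_def clif_elem_def by blast

lemma admissible_smooth: "admissible m f \<Longrightarrow> smooth_y_real m (\<lambda>x. f x C)"
  unfolding admissible_def smooth_y_iff_real by blast

lemma admissible_rpd_differentiable:
  "admissible m f \<Longrightarrow> j \<in> {2..m} \<Longrightarrow> rpd_differentiable j (\<lambda>x. f x C)"
  using admissible_smooth smooth_y_real_rpd_differentiable by blast

lemma admissible_depends_on_y: "admissible m f \<Longrightarrow> \<forall>j\<in>{2..m}. x j = x' j \<Longrightarrow> f x = f x'"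
  unfolding admissible_def depends_on_y_def by blast

lemma admissible_lincomb:
  assumes "finite I" "\<And>i. i \<in> I \<Longrightarrow> admissible m (f i)"
  shows "admissible m (\<lambda>x C. \<Sum>i\<in>I. a i * f i x C)"
proof (rule admissibleI)
  fix x show "clif_elem m (\<lambda>C. \<Sum>i\<in>I. a i * f i x C)"
    using admissible_clif_elem[OF assms(2)] by (simp add: clif_elem_def)
next
  fix x x' :: "nat \<Rightarrow> real" assume "\<forall>j\<in>{2..m}. x j = x' j"
  then have "f i x = f i x'" if "i \<in> I" for i
    using admissible_depends_on_y[OF assms(2)[OF that]] by blast
  then show "(\<lambda>C. \<Sum>i\<in>I. a i * f i x C) = (\<lambda>C. \<Sum>i\<in>I. a i * f i x' C)" by simp
next
  fix C show "smooth_y_real m (\<lambda>x. \<Sum>i\<in>I. a i * f i x C)"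
    using assms by (intro smooth_y_real_lincomb admissible_smooth)
qed

lemma admissible_sum:
  "finite I \<Longrightarrow> (\<And>i. i \<in> I \<Longrightarrow> admissible m (f i)) \<Longrightarrow> admissible m (\<lambda>x C. \<Sum>i\<in>I. f i x C)"
  using admissible_lincomb[of I m f "\<lambda>_. 1"] by simp

lemma admissible_add: "admissible m f \<Longrightarrow> admissible m g \<Longrightarrow> admissible m (\<lambda>x C. f x C + g x C)"
  using admissible_sum[of "UNIV :: bool set" m "\<lambda>b. if b then f else g"] by (simp add: UNIV_bool add.commute)

lemma admissible_scale: "admissible m f \<Longrightarrow> admissible m (\<lambda>x C. r * f x C)"
  using admissible_lincomb[of "{()}" m "\<lambda>_. f" "\<lambda>_. r"] by simp

lemma admissible_diff: "admissible m f \<Longrightarrow> admissible m g \<Longrightarrow> admissible m (\<lambda>x C. f x C - g x C)"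
  using admissible_add[of m f "\<lambda>x C. (-1) * g x C"] admissible_scale[of m g "-1"] by simp

lemma clmul_const_left_eq_sum:
  "clmul m u a C = (\<Sum>AB\<in>Pow {1..m} \<times> Pow {1..m}. (blade_coeff (fst AB) (snd AB) C * u (fst AB)) * a (snd AB))"
  unfolding clmul_eq_blade_coeff sum.cartesian_product by (simp add: split_def mult_ac)

lemma clmul_const_right_eq_sum:
  "clmul m a u C = (\<Sum>AB\<in>Pow {1..m} \<times> Pow {1..m}. (blade_coeff (fst AB) (snd AB) C * u (snd AB)) * a (fst AB))"
  unfolding clmul_eq_blade_coeff sum.cartesian_product by (simp add: split_def mult_ac)

lemma admissible_clmul_left: "admissible m f \<Longrightarrow> admissible m (\<lambda>x. clmul m u (f x))"
proof (rule admissibleI)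
  fix x x' :: "nat \<Rightarrow> real"
  assume "admissible m f" "\<forall>j\<in>{2..m}. x j = x' j"
  then have "f x = f x'" by (rule admissible_depends_on_y)
  then show "clmul m u (f x) = clmul m u (f x')" by simp
next
  fix C assume "admissible m f"
  then show "smooth_y_real m (\<lambda>x. clmul m u (f x) C)"
    unfolding clmul_const_left_eq_sum by (intro smooth_y_real_lincomb admissible_smooth) auto
qed (rule clif_elem_clmul)

lemma admissible_clmul_right: "admissible m f \<Longrightarrow> admissible m (\<lambda>x. clmul m (f x) u)"
proof (rule admissibleI)
  fix x x' :: "nat \<Rightarrow> real"
  assume "admissible m f" "\<forall>j\<in>{2..m}. x j = x' j"
  then have "f x = f x'" by (rule admissible_depends_on_y)
  then show "clmul m (f x) u = clmul m (f x') u" by simp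
next
  fix C assume "admissible m f"
  then show "smooth_y_real m (\<lambda>x. clmul m (f x) u C)"
    unfolding clmul_const_right_eq_sum by (intro smooth_y_real_lincomb admissible_smooth) auto
qed (rule clif_elem_clmul)

lemma pd_lincomb:
  assumes "finite I" "\<And>i. i \<in> I \<Longrightarrow> admissible m (f i)" "j \<in> {2..m}"
  shows "pd j (\<lambda>x C. \<Sum>i\<in>I. a i * f i x C) = (\<lambda>x C. \<Sum>i\<in>I. a i * pd j (f i) x C)"
  unfolding pd_eq_rpd[abs_def]
  using assms by (subst rpd_lincomb) (auto intro: admissible_rpd_differentiable[OF _ assms(3)])

lemma pd_sum:
  "finite I \<Longrightarrow> (\<And>i. i \<in> I \<Longrightarrow> admissible m (f i)) \<Longrightarrow> j \<in> {2..m} \<Longrightarrow>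
    pd j (\<lambda>x C. \<Sum>i\<in>I. f i x C) = (\<lambda>x C. \<Sum>i\<in>I. pd j (f i) x C)"
  using pd_lincomb[of I m f j "\<lambda>_. 1"] by simp

lemma pd_add:
  "admissible m f \<Longrightarrow> admissible m g \<Longrightarrow> j \<in> {2..m} \<Longrightarrow>
    pd j (\<lambda>x C. f x C + g x C) = (\<lambda>x C. pd j f x C + pd j g x C)"
  using pd_sum[of "UNIV :: bool set" m "\<lambda>b. if b then f else g" j] by (simp add: UNIV_bool add.commute)

lemma pd_scale:
  "admissible m f \<Longrightarrow> j \<in> {2..m} \<Longrightarrow> pd j (\<lambda>x C. r * f x C) = (\<lambda>x C. r * pd j f x C)"
  using pd_lincomb[of "{()}" m "\<lambda>_. f" j "\<lambda>_. r"] by simp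

lemma pd_diff:
  "admissible m f \<Longrightarrow> admissible m g \<Longrightarrow> j \<in> {2..m} \<Longrightarrow>
    pd j (\<lambda>x C. f x C - g x C) = (\<lambda>x C. pd j f x C - pd j g x C)"
  using pd_add[of m f "\<lambda>x C. (-1) * g x C" j] pd_scale[of m g j "-1"] admissible_scale[of m g "-1"]
  by simp

lemma pd_clmul_left:
  assumes "admissible m f" "j \<in> {2..m}"
  shows "pd j (\<lambda>x. clmul m u (f x)) = (\<lambda>x. clmul m u (pd j f x))"
  unfolding pd_eq_rpd[abs_def] clmul_const_left_eq_sum
  using assms by (subst rpd_lincomb) (auto intro: admissible_rpd_differentiable[OF _ assms(2)])

lemma pd_clmul_right:
  assumes "admissible m f" "j \<in> {2..m}"
  shows "pd j (\<lambda>x. clmul m (f x) u) = (\<lambda>x. clmul m (pd j f x) u)"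
  unfolding pd_eq_rpd[abs_def] clmul_const_right_eq_sum
  using assms by (subst rpd_lincomb) (auto intro: admissible_rpd_differentiable[OF _ assms(2)])

lemma admissible_pd:
  assumes f: "admissible m f" and j: "j \<in> {2..m}"
  shows "admissible m (pd j f)"
proof (rule admissibleI)
  fix x show "clif_elem m (pd j f x)"
    using admissible_clif_elem[OF f] by (simp add: clif_elem_def pd_def)
next
  fix x x' :: "nat \<Rightarrow> real" assume x: "\<forall>j\<in>{2..m}. x j = x' j"
  then have "f (x(j := t)) = f (x'(j := t))" for t
    by (intro admissible_depends_on_y[OF f]) auto
  moreover have "x j = x' j" using x j by auto
  ultimately show "pd j f x = pd j f x'" unfolding pd_def by simp
next
  fix C show "smooth_y_real m (\<lambda>x. pd j f x C)"
    unfolding pd_eq_rpd using smooth_y_real_rpd[OF admissible_smooth[OF f] j] by simp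
qed

lemma pd_commute:
  "admissible m f \<Longrightarrow> i \<in> {2..m} \<Longrightarrow> j \<in> {2..m} \<Longrightarrow> pd i (pd j f) = pd j (pd i f)"
  unfolding pd_eq_rpd[abs_def] using rpd_commute[OF admissible_smooth] by simp

lemma pd_zero: "pd j (\<lambda>x C. 0) = (\<lambda>x C. 0)"
  by (intro ext) (simp add: pd_def DERIV_imp_deriv[OF DERIV_const])

section \<open>The operators \<open>\<partial>\<^sub>y\<close>, \<open>U\<close> and \<open>V\<close>\<close>

definition fadd :: "((nat \<Rightarrow> real) \<Rightarrow> clif) \<Rightarrow> ((nat \<Rightarrow> real) \<Rightarrow> clif) \<Rightarrow> (nat \<Rightarrow> real) \<Rightarrow> clif" where
  "fadd f g = (\<lambda>x C. f x C + g x C)"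

definition fscale :: "real \<Rightarrow> ((nat \<Rightarrow> real) \<Rightarrow> clif) \<Rightarrow> (nat \<Rightarrow> real) \<Rightarrow> clif" where
  "fscale r f = (\<lambda>x C. r * f x C)"

definition sandwich1 :: "nat \<Rightarrow> ((nat \<Rightarrow> real) \<Rightarrow> clif) \<Rightarrow> (nat \<Rightarrow> real) \<Rightarrow> clif" where
  "sandwich1 m f = (\<lambda>x. clmul m (clmul m (gen 1) (f x)) (gen 1))"

text \<open>\<open>Utilde\<close> is \<open>U = 1 + E + R\<close> with \<open>E f = e\<^sub>1 f e\<^sub>1\<close> and \<open>R f = f \<partial>\<^sub>y\<close>; the operator
  \<open>V = 1 - E + R\<close> is its twin under \<open>\<partial>\<^sub>y\<close> (which anticommutes with \<open>E\<close>), and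
  \<open>W = 1 - E - R\<close> satisfies \<open>W U = 1 - (E + R)\<^sup>2 = -R\<^sup>2\<close> because \<open>E\<^sup>2 = 1\<close> and \<open>E R = - R E\<close>.\<close>

definition Vtilde :: "nat \<Rightarrow> ((nat \<Rightarrow> real) \<Rightarrow> clif) \<Rightarrow> (nat \<Rightarrow> real) \<Rightarrow> clif" where
  "Vtilde m f = fadd (fadd f (fscale (-1) (sandwich1 m f))) (rdy m f)"

definition Wtilde :: "nat \<Rightarrow> ((nat \<Rightarrow> real) \<Rightarrow> clif) \<Rightarrow> (nat \<Rightarrow> real) \<Rightarrow> clif" where
  "Wtilde m f = fadd (fadd f (fscale (-1) (sandwich1 m f))) (fscale (-1) (rdy m f))"

definition laplace_y :: "nat \<Rightarrow> ((nat \<Rightarrow> real) \<Rightarrow> clif) \<Rightarrow> (nat \<Rightarrow> real) \<Rightarrow> clif" where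
  "laplace_y m f = (\<lambda>x C. \<Sum>j\<in>{2..m}. pd j (pd j f) x C)"

lemma Utilde_eq: "Utilde m f = fadd (fadd f (sandwich1 m f)) (rdy m f)"
  by (intro ext) (simp add: Utilde_def fadd_def sandwich1_def)

lemma rdy_eq_sum: "rdy m f = (\<lambda>x C. \<Sum>j\<in>{2..m}. clmul m (pd j f x) (gen j) C)"
  by (intro ext) (simp add: rdy_def)

lemma ldy_eq_sum: "ldy m f = (\<lambda>x C. \<Sum>j\<in>{2..m}. clmul m (gen j) (pd j f x) C)"
  by (intro ext) (simp add: ldy_def)

lemma admissible_fadd: "admissible m f \<Longrightarrow> admissible m g \<Longrightarrow> admissible m (fadd f g)"
  unfolding fadd_def by (rule admissible_add)

lemma admissible_fscale: "admissible m f \<Longrightarrow> admissible m (fscale r f)"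
  unfolding fscale_def by (rule admissible_scale)

lemma admissible_sandwich1: "admissible m f \<Longrightarrow> admissible m (sandwich1 m f)"
  unfolding sandwich1_def by (intro admissible_clmul_right admissible_clmul_left)

lemma admissible_rdy: "admissible m f \<Longrightarrow> admissible m (rdy m f)"
  unfolding rdy_eq_sum by (intro admissible_sum admissible_clmul_right admissible_pd) auto

lemma admissible_ldy: "admissible m f \<Longrightarrow> admissible m (ldy m f)"
  unfolding ldy_eq_sum by (intro admissible_sum admissible_clmul_left admissible_pd) auto

lemma admissible_Utilde: "admissible m f \<Longrightarrow> admissible m (Utilde m f)"
  unfolding Utilde_eq by (intro admissible_fadd admissible_sandwich1 admissible_rdy)

lemma admissible_Vtilde: "admissible m f \<Longrightarrow> admissible m (Vtilde m f)"
  unfolding Vtilde_def by (intro admissible_fadd admissible_fscale admissible_sandwich1 admissible_rdy)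

lemmas admissible_intros =
  admissible_fadd admissible_fscale admissible_sandwich1 admissible_rdy admissible_ldy

lemma admissible_funpow:
  assumes "\<And>g. admissible m g \<Longrightarrow> admissible m (T g)" "admissible m f"
  shows "admissible m ((T ^^ k) f)"
  by (induction k) (simp_all add: assms)

lemma pd_sandwich1:
  "admissible m f \<Longrightarrow> j \<in> {2..m} \<Longrightarrow> pd j (sandwich1 m f) = sandwich1 m (pd j f)"
  unfolding sandwich1_def by (simp add: pd_clmul_right admissible_clmul_left pd_clmul_left)

lemma rdy_fadd:
  assumes "admissible m f" "admissible m g"
  shows "rdy m (fadd f g) = fadd (rdy m f) (rdy m g)"
  using assms by (simp add: rdy_eq_sum fadd_def pd_add clmul_add_left sum.distrib)

lemma ldy_fadd:
  assumes "admissible m f" "admissible m g"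
  shows "ldy m (fadd f g) = fadd (ldy m f) (ldy m g)"
  using assms by (simp add: ldy_eq_sum fadd_def pd_add clmul_add_right sum.distrib)

lemma rdy_fscale: "admissible m f \<Longrightarrow> rdy m (fscale r f) = fscale r (rdy m f)"
  by (simp add: rdy_eq_sum fscale_def pd_scale clmul_scale_left sum_distrib_left)

lemma ldy_fscale: "admissible m f \<Longrightarrow> ldy m (fscale r f) = fscale r (ldy m f)"
  by (simp add: ldy_eq_sum fscale_def pd_scale clmul_scale_right sum_distrib_left)

lemma fscale_fscale: "fscale r (fscale s g) = fscale (r * s) g"
  by (simp add: fscale_def mult.assoc)

lemma fscale_one: "fscale 1 g = g"
  by (simp add: fscale_def)

lemma sandwich1_fadd: "sandwich1 m (fadd f g) = fadd (sandwich1 m f) (sandwich1 m g)"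
  by (simp add: sandwich1_def fadd_def clmul_add_right clmul_add_left)

lemma sandwich1_sandwich1: "m \<ge> 1 \<Longrightarrow> admissible m f \<Longrightarrow> sandwich1 m (sandwich1 m f) = f"
  by (intro ext) (simp only: sandwich1_def gen1_sandwich_twice admissible_clif_elem)

lemma rdy_sandwich1:
  assumes m: "m \<ge> 1" and f: "admissible m f"
  shows "rdy m (sandwich1 m f) = fscale (-1) (sandwich1 m (rdy m f))"
proof -
  have "clmul m (pd k (sandwich1 m f) x) (gen k) =
      (\<lambda>D. - clmul m (clmul m (gen 1) (clmul m (pd k f x) (gen k))) (gen 1) D)" if "k \<in> {2..m}" for k x
    using pd_sandwich1[OF f that] gen1_sandwich_mult_gen[OF m that] by (simp add: sandwich1_def)
  then show ?thesis
    by (simp add: rdy_eq_sum fscale_def sandwich1_def clmul_sum_right clmul_sum_left sum_negf)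
qed

lemma ldy_sandwich1:
  assumes m: "m \<ge> 1" and f: "admissible m f"
  shows "ldy m (sandwich1 m f) = fscale (-1) (sandwich1 m (ldy m f))"
proof -
  have "clmul m (gen k) (pd k (sandwich1 m f) x) =
      (\<lambda>D. - clmul m (clmul m (gen 1) (clmul m (gen k) (pd k f x))) (gen 1) D)" if "k \<in> {2..m}" for k x
    using pd_sandwich1[OF f that] gen_mult_gen1_sandwich[OF m that] by (simp add: sandwich1_def)
  then show ?thesis
    by (simp add: ldy_eq_sum fscale_def sandwich1_def clmul_sum_right clmul_sum_left sum_negf)
qed

lemma pd_rdy:
  assumes f: "admissible m f" and j: "j \<in> {2..m}"
  shows "pd j (rdy m f) = (\<lambda>x C. \<Sum>k\<in>{2..m}. clmul m (pd j (pd k f) x) (gen k) C)"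
proof -
  have "pd j (rdy m f) = (\<lambda>x C. \<Sum>k\<in>{2..m}. pd j (\<lambda>x. clmul m (pd k f x) (gen k)) x C)"
    unfolding rdy_eq_sum using f j by (intro pd_sum) (auto intro!: admissible_clmul_right admissible_pd)
  also have "\<dots> = (\<lambda>x C. \<Sum>k\<in>{2..m}. clmul m (pd j (pd k f) x) (gen k) C)"
    using f j by (intro ext sum.cong refl) (simp add: pd_clmul_right admissible_pd)
  finally show ?thesis .
qed

lemma pd_ldy:
  assumes f: "admissible m f" and j: "j \<in> {2..m}"
  shows "pd j (ldy m f) = (\<lambda>x C. \<Sum>k\<in>{2..m}. clmul m (gen k) (pd j (pd k f) x) C)"
proof -
  have "pd j (ldy m f) = (\<lambda>x C. \<Sum>k\<in>{2..m}. pd j (\<lambda>x. clmul m (gen k) (pd k f x)) x C)"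
    unfolding ldy_eq_sum using f j by (intro pd_sum) (auto intro!: admissible_clmul_left admissible_pd)
  also have "\<dots> = (\<lambda>x C. \<Sum>k\<in>{2..m}. clmul m (gen k) (pd j (pd k f) x) C)"
    using f j by (intro ext sum.cong refl) (simp add: pd_clmul_left admissible_pd)
  finally show ?thesis .
qed

lemma ldy_rdy_commute:
  assumes f: "admissible m f"
  shows "ldy m (rdy m f) = rdy m (ldy m f)"
proof (intro ext)
  fix x D
  have "ldy m (rdy m f) x D =
      (\<Sum>j\<in>{2..m}. \<Sum>k\<in>{2..m}. clmul m (gen j) (clmul m (pd j (pd k f) x) (gen k)) D)"
    unfolding ldy_eq_sum[of m "rdy m f"] by (intro sum.cong refl) (simp add: pd_rdy[OF f] clmul_sum_right)
  also have "\<dots> = (\<Sum>k\<in>{2..m}. \<Sum>j\<in>{2..m}. clmul m (clmul m (gen j) (pd k (pd j f) x)) (gen k) D)"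
    by (subst sum.swap) (intro sum.cong refl, simp add: clmul_assoc pd_commute[OF f])
  also have "\<dots> = rdy m (ldy m f) x D"
    unfolding rdy_eq_sum[of m "ldy m f"] by (intro sum.cong refl) (simp add: pd_ldy[OF f] clmul_sum_left)
  finally show "ldy m (rdy m f) x D = rdy m (ldy m f) x D" .
qed

lemma sum_sum_eq_if_antisymmetric:
  fixes T :: "'a \<Rightarrow> 'a \<Rightarrow> real"
  assumes "finite J" "\<And>k j. k \<in> J \<Longrightarrow> j \<in> J \<Longrightarrow> T k j + T j k = (if j = k then - 2 * d k else 0)"
  shows "(\<Sum>k\<in>J. \<Sum>j\<in>J. T k j) = - (\<Sum>k\<in>J. d k)"
proof -
  have "2 * (\<Sum>k\<in>J. \<Sum>j\<in>J. T k j) = (\<Sum>k\<in>J. \<Sum>j\<in>J. T k j) + (\<Sum>k\<in>J. \<Sum>j\<in>J. T j k)"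
    by (subst (2) sum.swap) simp
  also have "\<dots> = (\<Sum>k\<in>J. \<Sum>j\<in>J. if j = k then - 2 * d k else 0)"
    using assms(2) by (simp add: sum.distrib[symmetric])
  also have "\<dots> = - 2 * (\<Sum>k\<in>J. d k)" using assms(1) by (simp add: sum_distrib_left)
  finally show ?thesis by simp
qed

lemma rdy_rdy_eq_laplace:
  assumes f: "admissible m f"
  shows "rdy m (rdy m f) = fscale (-1) (laplace_y m f)"
proof (intro ext)
  fix x D
  have "rdy m (rdy m f) x D =
      (\<Sum>k\<in>{2..m}. \<Sum>j\<in>{2..m}. clmul m (clmul m (pd k (pd j f) x) (gen j)) (gen k) D)"
    unfolding rdy_eq_sum[of m "rdy m f"] by (intro sum.cong refl) (simp add: pd_rdy[OF f] clmul_sum_left)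
  also have "\<dots> = - (\<Sum>k\<in>{2..m}. pd k (pd k f) x D)"
  proof (rule sum_sum_eq_if_antisymmetric)
    fix k j assume kj: "k \<in> {2..m}" "j \<in> {2..m}"
    then have "pd j (pd k f) = pd k (pd j f)" "clif_elem m (pd k (pd j f) x)"
      using f pd_commute by (auto intro!: admissible_clif_elem admissible_pd)
    then show "clmul m (clmul m (pd k (pd j f) x) (gen j)) (gen k) D +
       clmul m (clmul m (pd j (pd k f) x) (gen k)) (gen j) D = (if j = k then - 2 * pd k (pd k f) x D else 0)"
      using clifford_relation_right[of j m k "pd k (pd j f) x" D] kj by auto
  qed simp
  finally show "rdy m (rdy m f) x D = fscale (-1) (laplace_y m f) x D"
    by (simp add: fscale_def laplace_y_def)
qed

lemma ldy_ldy_eq_laplace: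
  assumes f: "admissible m f"
  shows "ldy m (ldy m f) = fscale (-1) (laplace_y m f)"
proof (intro ext)
  fix x D
  have "ldy m (ldy m f) x D =
      (\<Sum>k\<in>{2..m}. \<Sum>j\<in>{2..m}. clmul m (gen k) (clmul m (gen j) (pd k (pd j f) x)) D)"
    unfolding ldy_eq_sum[of m "ldy m f"] by (intro sum.cong refl) (simp add: pd_ldy[OF f] clmul_sum_right)
  also have "\<dots> = - (\<Sum>k\<in>{2..m}. pd k (pd k f) x D)"
  proof (rule sum_sum_eq_if_antisymmetric)
    fix k j assume kj: "k \<in> {2..m}" "j \<in> {2..m}"
    then have "pd j (pd k f) = pd k (pd j f)" "clif_elem m (pd k (pd j f) x)"
      using f pd_commute by (auto intro!: admissible_clif_elem admissible_pd)
    then show "clmul m (gen k) (clmul m (gen j) (pd k (pd j f) x)) D +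
       clmul m (gen j) (clmul m (gen k) (pd j (pd k f) x)) D = (if j = k then - 2 * pd k (pd k f) x D else 0)"
      using clifford_relation_left[of j m k "pd k (pd j f) x" D] kj by auto
  qed simp
  finally show "ldy m (ldy m f) x D = fscale (-1) (laplace_y m f) x D"
    by (simp add: fscale_def laplace_y_def)
qed

lemma ldy_Utilde:
  assumes "m \<ge> 2" "admissible m f"
  shows "ldy m (Utilde m f) = Vtilde m (ldy m f)"
  using assms by (simp add: Utilde_eq Vtilde_def ldy_fadd admissible_intros ldy_sandwich1 ldy_rdy_commute)

lemma ldy_Vtilde:
  assumes "m \<ge> 2" "admissible m f"
  shows "ldy m (Vtilde m f) = Utilde m (ldy m f)"
  using assms by (simp add: Utilde_eq Vtilde_def ldy_fadd ldy_fscale admissible_intros ldy_sandwich1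
      ldy_rdy_commute fscale_fscale fscale_one)

lemma Wtilde_Utilde:
  assumes "m \<ge> 1" "admissible m f"
  shows "Wtilde m (Utilde m f) = fscale (-1) (rdy m (rdy m f))"
proof -
  have "Wtilde m (Utilde m f) = fadd (fadd (fadd (fadd f (sandwich1 m f)) (rdy m f))
      (fscale (-1) (fadd (fadd (sandwich1 m f) f) (sandwich1 m (rdy m f)))))
      (fscale (-1) (fadd (fadd (rdy m f) (fscale (-1) (sandwich1 m (rdy m f)))) (rdy m (rdy m f))))"
    using assms by (simp add: Wtilde_def Utilde_eq sandwich1_fadd sandwich1_sandwich1 rdy_fadd
        rdy_sandwich1 admissible_intros)
  also have "\<dots> = fscale (-1) (rdy m (rdy m f))"
    by (intro ext) (simp add: fadd_def fscale_def)
  finally show ?thesis .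
qed

lemma rdy_rdy_Utilde:
  assumes "m \<ge> 1" "admissible m f"
  shows "rdy m (rdy m (Utilde m f)) = Utilde m (rdy m (rdy m f))"
  using assms by (simp add: Utilde_eq rdy_fadd rdy_fscale rdy_sandwich1 admissible_intros
      fscale_fscale fscale_one)

lemma rdy_zero: "rdy m (\<lambda>x C. 0) = (\<lambda>x C. 0)"
  by (simp add: rdy_eq_sum pd_zero clmul_zero_left)

lemma ldy_zero: "ldy m (\<lambda>x C. 0) = (\<lambda>x C. 0)"
  by (simp add: ldy_eq_sum pd_zero clmul_zero_right)

lemma ldy_funpow_zero: "(ldy m ^^ k) (\<lambda>x C. 0) = (\<lambda>x C. 0)"
  by (induction k) (simp_all add: ldy_zero)

lemma Wtilde_zero: "Wtilde m (\<lambda>x C. 0) = (\<lambda>x C. 0)"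
  by (simp add: Wtilde_def sandwich1_def fadd_def fscale_def rdy_zero clmul_zero_right clmul_zero_left)

lemma ldy_funpow_Utilde_Vtilde:
  assumes "m \<ge> 2" "admissible m f"
  shows "(ldy m ^^ k) (Utilde m f) = (if even k then Utilde m else Vtilde m) ((ldy m ^^ k) f) \<and>
    (ldy m ^^ k) (Vtilde m f) = (if even k then Vtilde m else Utilde m) ((ldy m ^^ k) f)"
proof (induction k)
  case (Suc k)
  have "admissible m ((ldy m ^^ k) f)" by (rule admissible_funpow[OF admissible_ldy assms(2)])
  then show ?case
    using Suc ldy_Utilde[OF assms(1)] ldy_Vtilde[OF assms(1)] by simp
qed simp

lemma Vtilde_funpow_ldy_funpow_odd:
  assumes "m \<ge> 2" "admissible m f" "odd k"
  shows "(Vtilde m ^^ N) ((ldy m ^^ k) f) = (ldy m ^^ k) ((Utilde m ^^ N) f)"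
proof (induction N)
  case (Suc N)
  have "admissible m ((Utilde m ^^ N) f)" by (rule admissible_funpow[OF admissible_Utilde assms(2)])
  then show ?case
    using Suc ldy_funpow_Utilde_Vtilde[OF assms(1), of "(Utilde m ^^ N) f" k] assms(3) by simp
qed simp

lemma rdy_funpow_even_Utilde:
  assumes "m \<ge> 1" "admissible m f"
  shows "(rdy m ^^ (2 * k)) (Utilde m f) = Utilde m ((rdy m ^^ (2 * k)) f)"
proof (induction k)
  case (Suc k)
  have "admissible m ((rdy m ^^ (2 * k)) f)" by (rule admissible_funpow[OF admissible_rdy assms(2)])
  then show ?case using Suc rdy_rdy_Utilde[OF assms(1)] by simp
qed simp

lemma rdy_funpow_eq_zero_if_Utilde_funpow_eq_zero:
  assumes "m \<ge> 1" "admissible m f" "(Utilde m ^^ k) f = (\<lambda>x C. 0)"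
  shows "(rdy m ^^ (2 * k)) f = (\<lambda>x C. 0)"
  using assms(2,3)
proof (induction k arbitrary: f)
  case (Suc k)
  have "(Utilde m ^^ k) (Utilde m f) = (\<lambda>x C. 0)"
    using Suc.prems(2) by (simp add: funpow_Suc_right del: funpow.simps)
  then have "(rdy m ^^ (2 * k)) (Utilde m f) = (\<lambda>x C. 0)"
    by (rule Suc.IH[OF admissible_Utilde[OF Suc.prems(1)]])
  then have "Utilde m ((rdy m ^^ (2 * k)) f) = (\<lambda>x C. 0)"
    using rdy_funpow_even_Utilde[OF assms(1) Suc.prems(1)] by simp
  moreover have "admissible m ((rdy m ^^ (2 * k)) f)"
    by (rule admissible_funpow[OF admissible_rdy Suc.prems(1)])
  ultimately have "fscale (-1) (rdy m (rdy m ((rdy m ^^ (2 * k)) f))) = (\<lambda>x C. 0)"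
    using Wtilde_Utilde[OF assms(1)] Wtilde_zero by metis
  then show ?case by (simp add: fscale_def fun_eq_iff)
qed simp

lemma rdy_funpow_even_eq_ldy_funpow:
  assumes "admissible m f"
  shows "(rdy m ^^ (2 * k)) f = (ldy m ^^ (2 * k)) f"
proof (induction k)
  case (Suc k)
  have "admissible m ((ldy m ^^ (2 * k)) f)" by (rule admissible_funpow[OF admissible_ldy assms])
  then show ?case using Suc rdy_rdy_eq_laplace ldy_ldy_eq_laplace by simp
qed simp

lemma rdy_lincomb:
  assumes "finite I" "\<And>i. i \<in> I \<Longrightarrow> admissible m (f i)"
  shows "rdy m (\<lambda>x C. \<Sum>i\<in>I. a i * f i x C) = (\<lambda>x C. \<Sum>i\<in>I. a i * rdy m (f i) x C)"
proof -
  have "rdy m (\<lambda>x C. \<Sum>i\<in>I. a i * f i x C) =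
      (\<lambda>x C. \<Sum>j\<in>{2..m}. \<Sum>i\<in>I. a i * clmul m (pd j (f i) x) (gen j) C)"
    unfolding rdy_eq_sum by (intro ext sum.cong refl) (simp add: pd_lincomb[OF assms] clmul_sum_left clmul_scale_left)
  then show ?thesis
    by (subst (asm) sum.swap) (simp add: rdy_eq_sum sum_distrib_left)
qed

lemma ldy_lincomb:
  assumes "finite I" "\<And>i. i \<in> I \<Longrightarrow> admissible m (f i)"
  shows "ldy m (\<lambda>x C. \<Sum>i\<in>I. a i * f i x C) = (\<lambda>x C. \<Sum>i\<in>I. a i * ldy m (f i) x C)"
proof -
  have "ldy m (\<lambda>x C. \<Sum>i\<in>I. a i * f i x C) =
      (\<lambda>x C. \<Sum>j\<in>{2..m}. \<Sum>i\<in>I. a i * clmul m (gen j) (pd j (f i) x) C)"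
    unfolding ldy_eq_sum by (intro ext sum.cong refl) (simp add: pd_lincomb[OF assms] clmul_sum_right clmul_scale_right)
  then show ?thesis
    by (subst (asm) sum.swap) (simp add: ldy_eq_sum sum_distrib_left)
qed

lemma Vtilde_lincomb:
  assumes "finite I" "\<And>i. i \<in> I \<Longrightarrow> admissible m (f i)"
  shows "Vtilde m (\<lambda>x C. \<Sum>i\<in>I. a i * f i x C) = (\<lambda>x C. \<Sum>i\<in>I. a i * Vtilde m (f i) x C)"
  by (simp add: Vtilde_def fadd_def fscale_def sandwich1_def rdy_lincomb[OF assms] clmul_sum_right
      clmul_sum_left clmul_scale_right clmul_scale_left algebra_simps sum.distrib sum_subtractf)

lemma Vtilde_funpow_lincomb:
  assumes "finite I" "\<And>i. i \<in> I \<Longrightarrow> admissible m (f i)"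
  shows "(Vtilde m ^^ N) (\<lambda>x C. \<Sum>i\<in>I. a i * f i x C) = (\<lambda>x C. \<Sum>i\<in>I. a i * (Vtilde m ^^ N) (f i) x C)"
proof (induction N)
  case (Suc N)
  have "\<And>i. i \<in> I \<Longrightarrow> admissible m ((Vtilde m ^^ N) (f i))"
    by (rule admissible_funpow[OF admissible_Vtilde assms(2)])
  then show ?case using Suc by (simp add: Vtilde_lincomb[OF assms(1)])
qed simp

section \<open>Dirac operators on \<open>exp(z) H + exp(z\<^sup>-) K\<close>\<close>

declare One_nat_def [simp del] \<comment> \<open>keeps \<open>gen 1\<close> from turning into \<open>gen (Suc 0)\<close>\<close>

definition exp_cos :: "(nat \<Rightarrow> real) \<Rightarrow> real" where
  "exp_cos x = exp (x 0) * cos (x 1)"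

definition exp_sin :: "(nat \<Rightarrow> real) \<Rightarrow> real" where
  "exp_sin x = exp (x 0) * sin (x 1)"

definition exp_comb :: "nat \<Rightarrow> (nat \<Rightarrow> real) \<Rightarrow> clif \<Rightarrow> clif \<Rightarrow> clif" where
  "exp_comb m x a b = cladd (clmul m (cexpz x) a) (clmul m (cexpzbar x) b)"

definition exp_ansatz ::
    "nat \<Rightarrow> ((nat \<Rightarrow> real) \<Rightarrow> clif) \<Rightarrow> ((nat \<Rightarrow> real) \<Rightarrow> clif) \<Rightarrow> (nat \<Rightarrow> real) \<Rightarrow> clif" where
  "exp_ansatz m H K = (\<lambda>x. exp_comb m x (H x) (K x))"

lemma cexpz_eq: "cexpz x = (\<lambda>C. exp_cos x * clone C + exp_sin x * gen 1 C)"
  by (intro ext) (simp add: cexpz_def exp_cos_def exp_sin_def clone_def gen_def)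

lemma cexpzbar_eq: "cexpzbar x = (\<lambda>C. exp_cos x * clone C - exp_sin x * gen 1 C)"
  by (intro ext) (simp add: cexpzbar_def exp_cos_def exp_sin_def clone_def gen_def)

lemma exp_comb_eq:
  assumes "clif_elem m a" "clif_elem m b"
  shows "exp_comb m x a b D =
    exp_cos x * (a D + b D) + exp_sin x * (clmul m (gen 1) a D - clmul m (gen 1) b D)"
  using assms by (simp add: exp_comb_def cladd_def cexpz_eq cexpzbar_eq clmul_add_left clmul_diff_left
      clmul_scale_left clmul_clone_left) (simp add: algebra_simps)

lemma exp_comb_add:
  "exp_comb m x (\<lambda>C. a C + a' C) (\<lambda>C. b C + b' C) D = exp_comb m x a b D + exp_comb m x a' b' D"
  by (simp add: exp_comb_def cladd_def clmul_add_right)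

lemma exp_comb_sum:
  "exp_comb m x (\<lambda>C. \<Sum>i\<in>I. a i C) (\<lambda>C. \<Sum>i\<in>I. b i C) D = (\<Sum>i\<in>I. exp_comb m x (a i) (b i) D)"
  by (simp add: exp_comb_def cladd_def clmul_sum_right sum.distrib)

lemma exp_comb_clmul_right: "clmul m (exp_comb m x a b) u = exp_comb m x (clmul m a u) (clmul m b u)"
  by (simp add: exp_comb_def cladd_def clmul_add_left clmul_assoc)

lemma exp_ansatz_zero: "exp_ansatz m (\<lambda>x C. 0) (\<lambda>x C. 0) = (\<lambda>x. clzero)"
  by (simp add: exp_ansatz_def exp_comb_def cladd_def clmul_zero_right clzero_def)

lemma gen1_commutes_cexpz: "m \<ge> 1 \<Longrightarrow> clmul m (gen 1) (cexpz x) = clmul m (cexpz x) (gen 1)"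
  by (simp add: cexpz_eq clmul_add_left clmul_add_right clmul_scale_left clmul_scale_right
      clmul_clone_left clmul_clone_right clif_elem_gen)

lemma gen1_commutes_cexpzbar: "m \<ge> 1 \<Longrightarrow> clmul m (gen 1) (cexpzbar x) = clmul m (cexpzbar x) (gen 1)"
  by (simp add: cexpzbar_eq clmul_diff_left clmul_diff_right clmul_scale_left clmul_scale_right
      clmul_clone_left clmul_clone_right clif_elem_gen)

lemma gen_mult_cexpz:
  assumes "j \<in> {2..m}"
  shows "clmul m (gen j) (cexpz x) = clmul m (cexpzbar x) (gen j)"
proof -
  have "j \<in> {1..m}" "1 \<in> {1..m}" "j \<noteq> 1" using assms by auto
  then show ?thesis
    using gen_anticomm[of j m 1] by (simp add: cexpz_eq cexpzbar_eq clmul_add_right clmul_diff_left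
        clmul_scale_right clmul_scale_left clmul_clone_left clmul_clone_right clif_elem_gen)
qed

lemma gen_mult_cexpzbar:
  assumes "j \<in> {2..m}"
  shows "clmul m (gen j) (cexpzbar x) = clmul m (cexpz x) (gen j)"
proof -
  have "j \<in> {1..m}" "1 \<in> {1..m}" "j \<noteq> 1" using assms by auto
  then show ?thesis
    using gen_anticomm[of j m 1] by (simp add: cexpz_eq cexpzbar_eq clmul_diff_right clmul_add_left
        clmul_scale_right clmul_scale_left clmul_clone_left clmul_clone_right clif_elem_gen)
qed

lemma gen1_mult_exp_comb:
  "m \<ge> 1 \<Longrightarrow> clmul m (gen 1) (exp_comb m x a b) = exp_comb m x (clmul m (gen 1) a) (clmul m (gen 1) b)"
  by (simp add: exp_comb_def cladd_def clmul_add_right clmul_assoc[symmetric]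
      gen1_commutes_cexpz gen1_commutes_cexpzbar)

lemma gen_mult_exp_comb:
  "j \<in> {2..m} \<Longrightarrow> clmul m (gen j) (exp_comb m x a b) = exp_comb m x (clmul m (gen j) b) (clmul m (gen j) a)"
  by (simp add: exp_comb_def cladd_def clmul_add_right clmul_assoc[symmetric] gen_mult_cexpz
      gen_mult_cexpzbar) (simp add: clmul_assoc add.commute)

lemma exp_ansatz_eq:
  assumes "admissible m H" "admissible m K"
  shows "exp_ansatz m H K = (\<lambda>x C. exp_cos x * (H x C + K x C) +
      exp_sin x * (clmul m (gen 1) (H x) C - clmul m (gen 1) (K x) C))"
  using assms by (intro ext) (simp add: exp_ansatz_def exp_comb_eq admissible_clif_elem)

lemma admissible_fun_upd_eq: "admissible m G \<Longrightarrow> j \<notin> {2..m} \<Longrightarrow> G (x(j := t)) = G x"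
  by (rule admissible_depends_on_y) auto

lemma pd0_exp_cos_sin:
  assumes "admissible m G1" "admissible m G2"
  shows "pd 0 (\<lambda>x C. exp_cos x * G1 x C + exp_sin x * G2 x C) =
    (\<lambda>x C. exp_cos x * G1 x C + exp_sin x * G2 x C)"
proof (intro ext)
  fix x C
  have "(\<lambda>t. exp_cos (x(0 := t)) * G1 (x(0 := t)) C + exp_sin (x(0 := t)) * G2 (x(0 := t)) C) =
      (\<lambda>t. exp t * (cos (x 1) * G1 x C + sin (x 1) * G2 x C))"
    using assms by (simp add: admissible_fun_upd_eq exp_cos_def exp_sin_def algebra_simps)
  moreover have "((\<lambda>t. exp t * (cos (x 1) * G1 x C + sin (x 1) * G2 x C)) has_real_derivative
      exp (x 0) * (cos (x 1) * G1 x C + sin (x 1) * G2 x C)) (at (x 0))"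
    by (auto intro!: derivative_eq_intros)
  ultimately show "pd 0 (\<lambda>x C. exp_cos x * G1 x C + exp_sin x * G2 x C) x C =
      exp_cos x * G1 x C + exp_sin x * G2 x C"
    unfolding pd_def by (simp add: DERIV_imp_deriv exp_cos_def exp_sin_def algebra_simps)
qed

lemma pd1_exp_cos_sin:
  assumes "admissible m G1" "admissible m G2"
  shows "pd 1 (\<lambda>x C. exp_cos x * G1 x C + exp_sin x * G2 x C) =
    (\<lambda>x C. exp_cos x * G2 x C - exp_sin x * G1 x C)"
proof (intro ext)
  fix x C
  have "(\<lambda>t. exp_cos (x(1 := t)) * G1 (x(1 := t)) C + exp_sin (x(1 := t)) * G2 (x(1 := t)) C) =
      (\<lambda>t. exp (x 0) * (cos t * G1 x C + sin t * G2 x C))"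
    using assms by (simp add: admissible_fun_upd_eq exp_cos_def exp_sin_def algebra_simps)
  moreover have "((\<lambda>t. exp (x 0) * (cos t * G1 x C + sin t * G2 x C)) has_real_derivative
      exp (x 0) * (- sin (x 1) * G1 x C + cos (x 1) * G2 x C)) (at (x 1))"
    by (auto intro!: derivative_eq_intros)
  ultimately show "pd 1 (\<lambda>x C. exp_cos x * G1 x C + exp_sin x * G2 x C) x C =
      exp_cos x * G2 x C - exp_sin x * G1 x C"
    unfolding pd_def by (simp add: DERIV_imp_deriv exp_cos_def exp_sin_def algebra_simps)
qed

lemma pd_exp_cos_sin:
  assumes "admissible m G1" "admissible m G2" "j \<in> {2..m}"
  shows "pd j (\<lambda>x C. exp_cos x * G1 x C + exp_sin x * G2 x C) =
    (\<lambda>x C. exp_cos x * pd j G1 x C + exp_sin x * pd j G2 x C)"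
proof (intro ext)
  fix x C
  have "j \<noteq> 0" "j \<noteq> 1" using assms(3) by auto
  then have "(\<lambda>t. exp_cos (x(j := t)) * G1 (x(j := t)) C + exp_sin (x(j := t)) * G2 (x(j := t)) C) =
      (\<lambda>t. exp_cos x * G1 (x(j := t)) C + exp_sin x * G2 (x(j := t)) C)"
    by (simp add: exp_cos_def exp_sin_def)
  moreover have "((\<lambda>t. exp_cos x * G1 (x(j := t)) C + exp_sin x * G2 (x(j := t)) C) has_real_derivative
      exp_cos x * rpd j (\<lambda>y. G1 y C) x + exp_sin x * rpd j (\<lambda>y. G2 y C) x) (at (x j))"
    using assms by (intro DERIV_add DERIV_cmult rpd_has_derivative admissible_rpd_differentiable)
  ultimately show "pd j (\<lambda>x C. exp_cos x * G1 x C + exp_sin x * G2 x C) x C =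
      exp_cos x * pd j G1 x C + exp_sin x * pd j G2 x C"
    unfolding pd_def by (simp add: DERIV_imp_deriv rpd_def)
qed

lemma admissible_exp_ansatz_coeffs:
  assumes "admissible m H" "admissible m K"
  shows "admissible m (\<lambda>x C. H x C + K x C)"
    and "admissible m (\<lambda>x C. clmul m (gen 1) (H x) C - clmul m (gen 1) (K x) C)"
  using admissible_add[OF assms] admissible_diff[OF assms[THEN admissible_clmul_left]] by simp_all

lemma pd0_exp_ansatz:
  assumes "admissible m H" "admissible m K"
  shows "pd 0 (exp_ansatz m H K) = exp_ansatz m H K"
  unfolding exp_ansatz_eq[OF assms] using admissible_exp_ansatz_coeffs[OF assms] by (rule pd0_exp_cos_sin)

lemma pd1_exp_ansatz:
  assumes m: "m \<ge> 1" and H: "admissible m H" and K: "admissible m K"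
  shows "pd 1 (exp_ansatz m H K) =
    exp_ansatz m (\<lambda>x. clmul m (gen 1) (H x)) (\<lambda>x C. - clmul m (gen 1) (K x) C)"
proof -
  have "admissible m (\<lambda>x C. - clmul m (gen 1) (K x) C)"
    using admissible_scale[OF admissible_clmul_left[OF K], of "-1" "gen 1"] by simp
  moreover have "1 \<in> {1..m}" using m by simp
  moreover have "pd 1 (exp_ansatz m H K) = (\<lambda>x C. exp_cos x * (clmul m (gen 1) (H x) C -
      clmul m (gen 1) (K x) C) - exp_sin x * (H x C + K x C))"
    unfolding exp_ansatz_eq[OF H K] using admissible_exp_ansatz_coeffs[OF H K] by (rule pd1_exp_cos_sin)
  ultimately show ?thesis
    using H K by (simp add: exp_ansatz_eq admissible_clmul_left clmul_neg_right gen_mult_gen_mult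
        admissible_clif_elem algebra_simps)
qed

lemma pd_exp_ansatz:
  assumes H: "admissible m H" and K: "admissible m K" and j: "j \<in> {2..m}"
  shows "pd j (exp_ansatz m H K) = exp_ansatz m (pd j H) (pd j K)"
  unfolding exp_ansatz_eq[OF H K] exp_ansatz_eq[OF admissible_pd[OF H j] admissible_pd[OF K j]]
    pd_exp_cos_sin[OF admissible_exp_ansatz_coeffs[OF H K] j]
  using H K j by (simp add: admissible_clmul_left pd_add pd_diff[OF admissible_clmul_left admissible_clmul_left]
      pd_clmul_left)

lemma rdirac_exp_ansatz:
  assumes m: "m \<ge> 2" and H: "admissible m H" and K: "admissible m K"
  shows "rdirac m (exp_ansatz m H K) = exp_ansatz m (Utilde m H) (Vtilde m K)"
proof (intro ext)
  fix x D
  have m1: "m \<ge> 1" and split: "{1..m} = insert 1 {2..m}" using m by auto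
  have "rdirac m (exp_ansatz m H K) x D = exp_comb m x (H x) (K x) D +
      clmul m (exp_comb m x (clmul m (gen 1) (H x)) (\<lambda>C. - clmul m (gen 1) (K x) C)) (gen 1) D +
      (\<Sum>j\<in>{2..m}. clmul m (exp_comb m x (pd j H x) (pd j K x)) (gen j) D)"
  proof -
    have "(\<Sum>j\<in>{2..m}. clmul m (pd j (exp_ansatz m H K) x) (gen j) D) = (\<Sum>j\<in>{2..m}. clmul m (exp_comb m x (pd j H x) (pd j K x)) (gen j) D)"
      using H K by (intro sum.cong refl) (simp add: pd_exp_ansatz, simp add: exp_ansatz_def)
    then show ?thesis
      unfolding rdirac_def split using H K
      by (simp add: pd0_exp_ansatz pd1_exp_ansatz[OF m1]) (simp add: exp_ansatz_def)
  qed
  also have "\<dots> = exp_comb m x (H x) (K x) D +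
      exp_comb m x (sandwich1 m H x) (\<lambda>C. -1 * sandwich1 m K x C) D +
      (\<Sum>j\<in>{2..m}. exp_comb m x (clmul m (pd j H x) (gen j)) (clmul m (pd j K x) (gen j)) D)"
    by (simp add: exp_comb_clmul_right sandwich1_def clmul_neg_left)
  also have "\<dots> = exp_comb m x (Utilde m H x) (Vtilde m K x) D"
    by (simp only: Utilde_eq Vtilde_def fadd_def fscale_def exp_comb_add rdy_def exp_comb_sum)
  finally show "rdirac m (exp_ansatz m H K) x D = exp_ansatz m (Utilde m H) (Vtilde m K) x D"
    by (simp add: exp_ansatz_def)
qed

lemma ldirac_exp_ansatz:
  assumes m: "m \<ge> 2" and H: "admissible m H" and K: "admissible m K"
  shows "ldirac m (exp_ansatz m H K) = exp_ansatz m (ldy m K) (fadd (ldy m H) (fscale 2 K))"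
proof (intro ext)
  fix x D
  have m1: "m \<ge> 1" and split: "{1..m} = insert 1 {2..m}" and "1 \<in> {1..m}" using m by auto
  have "ldirac m (exp_ansatz m H K) x D = exp_comb m x (H x) (K x) D +
      clmul m (gen 1) (exp_comb m x (clmul m (gen 1) (H x)) (\<lambda>C. - clmul m (gen 1) (K x) C)) D +
      (\<Sum>j\<in>{2..m}. clmul m (gen j) (exp_comb m x (pd j H x) (pd j K x)) D)"
  proof -
    have "(\<Sum>j\<in>{2..m}. clmul m (gen j) (pd j (exp_ansatz m H K) x) D) = (\<Sum>j\<in>{2..m}. clmul m (gen j) (exp_comb m x (pd j H x) (pd j K x)) D)"
      using H K by (intro sum.cong refl) (simp add: pd_exp_ansatz, simp add: exp_ansatz_def)
    then show ?thesis
      unfolding ldirac_def split using H K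
      by (simp add: pd0_exp_ansatz pd1_exp_ansatz[OF m1]) (simp add: exp_ansatz_def)
  qed
  also have "\<dots> = exp_comb m x (H x) (K x) D + exp_comb m x (\<lambda>C. -1 * H x C) (K x) D +
      (\<Sum>j\<in>{2..m}. exp_comb m x (clmul m (gen j) (pd j K x)) (clmul m (gen j) (pd j H x)) D)"
    using H K \<open>1 \<in> {1..m}\<close> by (simp add: gen1_mult_exp_comb[OF m1] gen_mult_exp_comb clmul_neg_right
        gen_mult_gen_mult admissible_clif_elem)
  also have "\<dots> = exp_comb m x (\<lambda>C. (H x C + -1 * H x C) + (\<Sum>j\<in>{2..m}. clmul m (gen j) (pd j K x) C))
      (\<lambda>C. (K x C + K x C) + (\<Sum>j\<in>{2..m}. clmul m (gen j) (pd j H x) C)) D"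
    by (simp only: exp_comb_add exp_comb_sum)
  also have "\<dots> = exp_comb m x (ldy m K x) (fadd (ldy m H) (fscale 2 K) x) D"
    by (simp add: ldy_def fadd_def fscale_def add.commute)
  finally show "ldirac m (exp_ansatz m H K) x D = exp_ansatz m (ldy m K) (fadd (ldy m H) (fscale 2 K)) x D"
    by (simp add: exp_ansatz_def)
qed

lemma rdirac_funpow_exp_ansatz:
  assumes "m \<ge> 2" "admissible m H" "admissible m K"
  shows "(rdirac m ^^ N) (exp_ansatz m H K) = exp_ansatz m ((Utilde m ^^ N) H) ((Vtilde m ^^ N) K)"
proof (induction N)
  case (Suc N)
  have "admissible m ((Utilde m ^^ N) H)" "admissible m ((Vtilde m ^^ N) K)"
    using assms by (auto intro: admissible_funpow admissible_Utilde admissible_Vtilde)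
  then show ?case using Suc by (simp add: rdirac_exp_ansatz[OF assms(1)])
qed simp

declare One_nat_def [simp]

section \<open>The generating function of the constants \<open>c\<^sub>k\<close>\<close>

fun lucas_fps :: "nat \<Rightarrow> real fps" where
  "lucas_fps 0 = 0"
| "lucas_fps (Suc 0) = 1"
| "lucas_fps (Suc (Suc n)) = 2 * lucas_fps (Suc n) + fps_X * lucas_fps n"

lemma lucas_fps_quadratic_root:
  assumes g: "1 + 2 * g = fps_X * g ^ 2"
  shows "lucas_fps N + lucas_fps (Suc N) * g = (fps_X * g) ^ N * g"
proof (induction N rule: lucas_fps.induct)
  case 2
  then show ?case using g by (simp add: power2_eq_square algebra_simps)
next
  case (3 k)
  have sq: "(fps_X * g) ^ 2 = fps_X + 2 * (fps_X * g)"
  proof -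
    have "(fps_X * g) ^ 2 = fps_X * (fps_X * g ^ 2)" by (simp add: power2_eq_square algebra_simps)
    also have "\<dots> = fps_X * (1 + 2 * g)" using g by simp
    finally show ?thesis by (simp add: algebra_simps)
  qed
  have "lucas_fps (Suc (Suc k)) + lucas_fps (Suc (Suc (Suc k))) * g =
      2 * (lucas_fps (Suc k) + lucas_fps (Suc (Suc k)) * g) + fps_X * (lucas_fps k + lucas_fps (Suc k) * g)"
    by (simp add: algebra_simps)
  also have "\<dots> = (fps_X * g) ^ k * g * (2 * (fps_X * g) + fps_X)"
    unfolding "3" by (simp add: algebra_simps)
  also have "\<dots> = (fps_X * g) ^ k * g * (fps_X * g) ^ 2"
    unfolding sq by (simp add: algebra_simps)
  also have "\<dots> = (fps_X * g) ^ Suc (Suc k) * g"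
    by (simp only: power_Suc2 power2_eq_square mult_ac)
  finally show ?case .
qed simp

lemma fps_nth_X_mult_power_mult: "i < N \<Longrightarrow> fps_nth ((fps_X * g) ^ N * g) i = (0::real)"
  by (simp add: power_mult_distrib mult.assoc fps_X_power_mult_nth)

lemma lucas_fps_nth_0: "fps_nth (lucas_fps (Suc N)) 0 = 2 ^ N"
proof (induction N rule: less_induct)
  case (less N)
  then show ?case by (cases N) simp_all
qed

definition lucas_closed :: "nat \<Rightarrow> real fps" where
  "lucas_closed N = (\<Sum>j\<le>N. fps_const (real (N choose (2 * j + 1))) * (1 + fps_X) ^ j)"

lemma binomial_odd_rec:
  "(Suc (Suc N) choose (2 * j + 1)) + (N choose (2 * j + 1)) =
     2 * (Suc N choose (2 * j + 1)) + (if j = 0 then 0 else N choose (2 * j - 1))"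
proof (cases j)
  case 0 then show ?thesis by simp
next
  case (Suc i)
  have a: "Suc (Suc N) choose (2 * j + 1) = (Suc N choose (2 * j)) + (Suc N choose (2 * j + 1))" by simp
  have b: "Suc N choose (2 * j + 1) = (N choose (2 * j)) + (N choose (2 * j + 1))" by simp
  have c: "Suc N choose (2 * j) = (N choose (2 * j - 1)) + (N choose (2 * j))"
    using Suc by (simp add: numeral_2_eq_2)
  show ?thesis using a b c Suc by simp
qed

lemma lucas_closed_extend:
  "N \<le> M \<Longrightarrow> lucas_closed N = (\<Sum>j\<le>M. fps_const (real (N choose (2 * j + 1))) * (1 + fps_X) ^ j)"
  unfolding lucas_closed_def by (rule sum.mono_neutral_left) auto

lemma one_plus_X_mult_lucas_closed:
  "(1 + fps_X) * lucas_closed N = (\<Sum>j\<le>Suc (Suc N).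
    fps_const (real (if j = 0 then 0 else N choose (2 * j - 1))) * (1 + fps_X) ^ j)"
proof -
  let ?Y = "1 + fps_X :: real fps"
  have "?Y * lucas_closed N = (\<Sum>j\<le>Suc N. fps_const (real (N choose (2 * j + 1))) * ?Y ^ Suc j)"
    unfolding lucas_closed_extend[of N "Suc N", OF le_SucI[OF order_refl]] sum_distrib_left
    by (intro sum.cong refl) (simp only: power_Suc mult_ac)
  also have "\<dots> = (\<Sum>j\<le>Suc N.
      fps_const (real (if Suc j = 0 then 0 else N choose (2 * Suc j - 1))) * ?Y ^ Suc j)"
    by simp
  also have "\<dots> = (\<Sum>j\<le>Suc (Suc N). fps_const (real (if j = 0 then 0 else N choose (2 * j - 1))) * ?Y ^ j)"
    by (subst sum.atMost_Suc_shift[of _ "Suc N"]) simp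
  finally show ?thesis .
qed

lemma lucas_closed_rec: "lucas_closed (Suc (Suc N)) = 2 * lucas_closed (Suc N) + fps_X * lucas_closed N"
proof -
  let ?Y = "1 + fps_X :: real fps"
  let ?M = "Suc (Suc N)"
  have sum_add: "(\<Sum>j\<le>M. fps_const (a j) * ?Y ^ j) + (\<Sum>j\<le>M. fps_const (b j) * ?Y ^ j) =
      (\<Sum>j\<le>M. fps_const (a j + b j) * ?Y ^ j)" for M a b
    by (simp add: sum.distrib[symmetric] distrib_right flip: fps_const_add)
  have sum_diff: "(\<Sum>j\<le>M. fps_const (a j) * ?Y ^ j) - (\<Sum>j\<le>M. fps_const (b j) * ?Y ^ j) =
      (\<Sum>j\<le>M. fps_const (a j - b j) * ?Y ^ j)" for M a b
    by (simp add: sum_subtractf[symmetric] left_diff_distrib flip: fps_const_sub)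
  have sum_double: "2 * (\<Sum>j\<le>M. fps_const (a j) * ?Y ^ j) = (\<Sum>j\<le>M. fps_const (2 * a j) * ?Y ^ j)" for M a
  proof -
    have double: "fps_const (2 * c) = 2 * (fps_const c :: real fps)" for c
      by (simp add: fps_numeral_fps_const)
    show ?thesis by (simp only: sum_distrib_left double mult.assoc)
  qed
  have "2 * lucas_closed (Suc N) + fps_X * lucas_closed N = 2 * lucas_closed (Suc N) + ?Y * lucas_closed N - lucas_closed N"
    by (simp add: algebra_simps)
  also have "\<dots> = (\<Sum>j\<le>?M. fps_const (2 * real (Suc N choose (2 * j + 1)) +
        real (if j = 0 then 0 else N choose (2 * j - 1)) - real (N choose (2 * j + 1))) * ?Y ^ j)"
    unfolding one_plus_X_mult_lucas_closed unfolding lucas_closed_extend[of "Suc N" ?M, OF le_SucI[OF order_refl]]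
      lucas_closed_extend[of N ?M, OF le_SucI[OF le_SucI[OF order_refl]]] sum_double sum_add sum_diff ..
  also have "\<dots> = lucas_closed ?M"
    unfolding lucas_closed_def
  proof (intro sum.cong refl)
    fix j
    have "real (Suc (Suc N) choose (2 * j + 1)) = 2 * real (Suc N choose (2 * j + 1)) +
        real (if j = 0 then 0 else N choose (2 * j - 1)) - real (N choose (2 * j + 1))"
      using arg_cong[OF binomial_odd_rec[of N j], of real] by (simp add: of_nat_add)
    then show "fps_const (2 * real (Suc N choose (2 * j + 1)) +
        real (if j = 0 then 0 else N choose (2 * j - 1)) - real (N choose (2 * j + 1))) * ?Y ^ j =
        fps_const (real (?M choose (2 * j + 1))) * ?Y ^ j" by simp
  qed
  finally show ?thesis by simp
qed

lemma lucas_fps_eq_closed: "lucas_fps N = lucas_closed N"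
proof (induction N rule: lucas_fps.induct)
  case 2
  show ?case by (simp add: lucas_closed_def numeral_2_eq_2)
next
  case (3 n)
  then show ?case by (simp add: lucas_closed_rec)
qed (simp add: lucas_closed_def)

lemma lucas_fps_nth: "fps_nth (lucas_fps N) i = (\<Sum>j\<le>N. real (N choose (2 * j + 1)) * real (j choose i))"
proof -
  have "fps_nth ((1 + fps_X :: real fps) ^ j) i = real (j choose i)" for j
    by (simp only: fps_binomial_of_nat[symmetric] fps_binomial_nth binomial_gbinomial)
  then show ?thesis unfolding lucas_fps_eq_closed lucas_closed_def by (simp add: fps_sum_nth)
qed

text \<open>The recursion defining \<open>c\<^sub>k\<close> says that \<open>g = \<Sum> c\<^sub>k\<^sub>+\<^sub>1 X\<^sup>k\<close> solves the triangular system
  \<open>[lucas_fps (k + 1) + lucas_fps (k + 2) g]\<^sub>k = 0\<close>, whose diagonal entries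
  \<open>[lucas_fps (k + 2)]\<^sub>0 = 2\<^sup>k\<^sup>+\<^sup>1\<close> are nonzero.  The power series root of \<open>1 + 2 g = X g\<^sup>2\<close> solves the
  same system, so the two coincide.\<close>

declare cstd.simps [simp del]

fun qroot_coeff :: "nat \<Rightarrow> real" where
  "qroot_coeff 0 = - 1 / 2"
| "qroot_coeff (Suc k) = (\<Sum>i\<le>k. qroot_coeff i * qroot_coeff (k - i)) / 2"

definition qroot_fps :: "real fps" where "qroot_fps = Abs_fps qroot_coeff"
definition cstd_fps :: "real fps" where "cstd_fps = Abs_fps (\<lambda>i. cstd (Suc i))"

lemma fps_nth_mult_2: "fps_nth (2 * f) n = 2 * fps_nth f (n::nat)" for f :: "real fps"
  by (simp add: fps_numeral_fps_const)

lemma qroot_fps_quadratic: "1 + 2 * qroot_fps = fps_X * qroot_fps ^ 2"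
proof (rule fps_ext)
  fix n
  show "fps_nth (1 + 2 * qroot_fps) n = fps_nth (fps_X * qroot_fps ^ 2) n"
  proof (cases n)
    case 0 then show ?thesis by (simp add: fps_nth_mult_2 qroot_fps_def)
  next
    case (Suc k)
    have "fps_nth (fps_X * qroot_fps ^ 2) n = fps_nth (qroot_fps * qroot_fps) k"
      using Suc by (simp only: fps_X_mult_nth power2_eq_square) simp
    also have "\<dots> = (\<Sum>i=0..k. qroot_coeff i * qroot_coeff (k - i))"
      by (simp add: fps_mult_nth qroot_fps_def)
    also have "\<dots> = 2 * qroot_coeff (Suc k)" by (simp add: atLeast0AtMost)
    finally show ?thesis using Suc by (simp add: fps_nth_mult_2 qroot_fps_def)
  qed
qed

lemma cstd_1: "cstd (Suc 0) = - 1 / 2"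
  by (subst cstd.simps) simp

lemma cstd_ge_2: "k \<ge> 2 \<Longrightarrow> cstd k = - (1 / 2 ^ k) * (\<Sum>j=1..k div 2. \<Sum>i=1..j.
                      real ((k + 1) choose (2 * j + 1)) * real (j choose i) * cstd (k - i))"
  by (subst cstd.simps) simp

lemma lucas_fps_nth_diag: "k \<ge> 1 \<Longrightarrow> fps_nth (lucas_fps (Suc k)) k = 0"
  unfolding lucas_fps_nth
proof (intro sum.neutral ballI)
  fix j assume "k \<ge> 1" "j \<in> {..Suc k}"
  show "real (Suc k choose (2 * j + 1)) * real (j choose k) = 0"
  proof (cases "j < k")
    case True then show ?thesis by simp
  next
    case False
    then have "Suc k < 2 * j + 1" using \<open>k \<ge> 1\<close> by simp
    then have "Suc k choose (2 * j + 1) = 0" by (rule binomial_eq_0)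
    then show ?thesis by (simp del: binomial_Suc_Suc)
  qed
qed

lemma lucas_cstd_convolution:
  assumes K: "K \<ge> 2"
  shows "(\<Sum>t=1..K - 1. fps_nth (lucas_fps (Suc K)) t * cstd (K - t)) =
    (\<Sum>j=1..K div 2. \<Sum>i=1..j. real ((K + 1) choose (2 * j + 1)) * real (j choose i) * cstd (K - i))"
proof -
  let ?T = "\<lambda>j t. real ((K + 1) choose (2 * j + 1)) * real (j choose t) * cstd (K - t)"
  have "(\<Sum>t=1..K - 1. fps_nth (lucas_fps (Suc K)) t * cstd (K - t)) = (\<Sum>t=1..K - 1. \<Sum>j\<le>Suc K. ?T j t)"
    unfolding lucas_fps_nth by (simp only: sum_distrib_right Suc_eq_plus1)
  also have "\<dots> = (\<Sum>j\<le>Suc K. \<Sum>t=1..K - 1. ?T j t)" by (rule sum.swap)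
  also have "\<dots> = (\<Sum>j=1..K div 2. \<Sum>t=1..K - 1. ?T j t)"
  proof (rule sum.mono_neutral_right)
    show "{1..K div 2} \<subseteq> {..Suc K}" by auto
    show "\<forall>j\<in>{..Suc K} - {1..K div 2}. (\<Sum>t=1..K - 1. ?T j t) = 0"
    proof
      fix j assume j: "j \<in> {..Suc K} - {1..K div 2}"
      show "(\<Sum>t=1..K - 1. ?T j t) = 0"
      proof (cases "j = 0")
        case True then show ?thesis by (intro sum.neutral) auto
      next
        case False
        then have "K div 2 < j" using j by auto
        then have "K + 1 < 2 * j + 1" by linarith
        then have z: "(K + 1) choose (2 * j + 1) = 0" by (rule binomial_eq_0)
        show ?thesis by (simp only: z) simp
      qed
    qed
  qed simp
  also have "\<dots> = (\<Sum>j=1..K div 2. \<Sum>i=1..j. ?T j i)"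
  proof (rule sum.cong[OF refl])
    fix j assume j: "j \<in> {1..K div 2}"
    have jk: "j \<le> K - 1" using j K by auto
    show "(\<Sum>t=1..K - 1. ?T j t) = (\<Sum>i=1..j. ?T j i)"
    proof (rule sum.mono_neutral_right)
      show "{1..j} \<subseteq> {1..K - 1}" using jk by auto
      show "\<forall>t\<in>{1..K - 1} - {1..j}. ?T j t = 0" by (auto simp: binomial_eq_0)
    qed simp
  qed
  finally show ?thesis by simp
qed

lemma cstd_fps_lucas_coeff: "fps_nth (lucas_fps (Suc k) + lucas_fps (Suc (Suc k)) * cstd_fps) k = 0"
proof (cases k)
  case 0
  then show ?thesis by (simp add: fps_mult_nth cstd_fps_def cstd_1)
next
  case (Suc k')
  define K where "K = Suc k"
  have k1: "k \<ge> 1" using Suc by simp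
  have "fps_nth (lucas_fps (Suc (Suc k)) * cstd_fps) k = (\<Sum>t=0..k. fps_nth (lucas_fps (Suc K)) t * cstd (K - t))"
    unfolding fps_mult_nth K_def cstd_fps_def by (intro sum.cong refl) (simp add: Suc_diff_le)
  also have "\<dots> = fps_nth (lucas_fps (Suc K)) 0 * cstd K + (\<Sum>t=1..k. fps_nth (lucas_fps (Suc K)) t * cstd (K - t))"
    by (simp add: sum.atLeast_Suc_atMost)
  also have "\<dots> = 2 ^ K * cstd K + (\<Sum>j=1..K div 2. \<Sum>i=1..j. real ((K + 1) choose (2 * j + 1)) * real (j choose i) * cstd (K - i))"
    using lucas_cstd_convolution[of K] k1 by (simp add: K_def lucas_fps_nth_0)
  also have "\<dots> = 0"
    using cstd_ge_2[of K] k1 unfolding K_def by simp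
  finally show ?thesis using lucas_fps_nth_diag[OF k1] by simp
qed

lemma qroot_fps_lucas_coeff: "fps_nth (lucas_fps (Suc k) + lucas_fps (Suc (Suc k)) * qroot_fps) k = 0"
  using lucas_fps_quadratic_root[OF qroot_fps_quadratic, of "Suc k"] fps_nth_X_mult_power_mult[of k "Suc k" qroot_fps] by simp

lemma lucas_coeff_system_unique:
  assumes g: "\<And>k. fps_nth (lucas_fps (Suc k) + lucas_fps (Suc (Suc k)) * g) k = 0"
    and h: "\<And>k. fps_nth (lucas_fps (Suc k) + lucas_fps (Suc (Suc k)) * h) k = (0::real)"
  shows "g = h"
proof (rule fps_ext)
  fix i
  show "fps_nth g i = fps_nth h i"
  proof (induction i rule: less_induct)
    case (less i)
    let ?L = "lucas_fps (Suc (Suc i))"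
    have "fps_nth (?L * (g - h)) i = 0"
      using g[of i] h[of i] by (simp add: algebra_simps)
    moreover have "(\<Sum>t=Suc 0..i. fps_nth ?L t * fps_nth (g - h) (i - t)) = 0"
      using less.IH by (intro sum.neutral) auto
    ultimately have "fps_nth ?L 0 * fps_nth (g - h) i = 0"
      by (simp add: fps_mult_nth sum.atLeast_Suc_atMost)
    then show ?case by (simp add: lucas_fps_nth_0)
  qed
qed

lemma cstd_fps_quadratic: "1 + 2 * cstd_fps = fps_X * cstd_fps ^ 2"
  using qroot_fps_quadratic lucas_coeff_system_unique[OF cstd_fps_lucas_coeff qroot_fps_lucas_coeff] by simp

section \<open>Left and right \<open>n\<close>-monogenicity\<close>

lemma rdirac_funpow_exp_ansatz_odd_ldy_eq_zero:
  assumes m: "m \<ge> 2" and A: "admissible m A" and U: "(Utilde m ^^ n) A = (\<lambda>x C. 0)"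
  shows "(rdirac m ^^ n) (exp_ansatz m A (\<lambda>x C. \<Sum>k=1..n. c k * (ldy m ^^ (2 * k - 1)) A x C)) =
    (\<lambda>x. clzero)"
proof -
  have admissible_ldy_pow: "admissible m ((ldy m ^^ k) A)" for k
    by (rule admissible_funpow[OF admissible_ldy A])
  have "(Vtilde m ^^ n) ((ldy m ^^ (2 * k - 1)) A) = (\<lambda>x C. 0)" if "k \<in> {1..n}" for k
    using that Vtilde_funpow_ldy_funpow_odd[OF m A, of "2 * k - 1" n]
    by (simp add: U ldy_funpow_zero)
  then have "(Vtilde m ^^ n) (\<lambda>x C. \<Sum>k=1..n. c k * (ldy m ^^ (2 * k - 1)) A x C) = (\<lambda>x C. 0)"
    by (simp add: Vtilde_funpow_lincomb admissible_ldy_pow)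
  moreover have "admissible m (\<lambda>x C. \<Sum>k=1..n. c k * (ldy m ^^ (2 * k - 1)) A x C)"
    by (rule admissible_lincomb) (simp_all add: admissible_ldy_pow)
  ultimately show ?thesis
    using A by (simp add: rdirac_funpow_exp_ansatz[OF m] U exp_ansatz_zero)
qed

text \<open>\<open>ldy_even_comb m n A p\<close> stands for \<open>p(\<partial>\<^sub>y\<^sup>2) A\<close>; truncating \<open>p\<close> after \<open>n\<close> terms is harmless once
  \<open>\<partial>\<^sub>y\<^sup>2\<^sup>n A = 0\<close>.\<close>

definition ldy_even_comb ::
    "nat \<Rightarrow> nat \<Rightarrow> ((nat \<Rightarrow> real) \<Rightarrow> clif) \<Rightarrow> real fps \<Rightarrow> (nat \<Rightarrow> real) \<Rightarrow> clif" where
  "ldy_even_comb m n A p = (\<lambda>x C. \<Sum>i<n. fps_nth p i * (ldy m ^^ (2 * i)) A x C)"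

definition ldy_odd_comb ::
    "nat \<Rightarrow> nat \<Rightarrow> ((nat \<Rightarrow> real) \<Rightarrow> clif) \<Rightarrow> real fps \<Rightarrow> (nat \<Rightarrow> real) \<Rightarrow> clif" where
  "ldy_odd_comb m n A p = (\<lambda>x C. \<Sum>i<n. fps_nth p i * (ldy m ^^ (2 * i + 1)) A x C)"

lemma admissible_ldy_even_comb: "admissible m A \<Longrightarrow> admissible m (ldy_even_comb m n A p)"
  unfolding ldy_even_comb_def by (intro admissible_lincomb admissible_funpow[OF admissible_ldy]) simp_all

lemma admissible_ldy_odd_comb: "admissible m A \<Longrightarrow> admissible m (ldy_odd_comb m n A p)"
  unfolding ldy_odd_comb_def by (intro admissible_lincomb admissible_funpow[OF admissible_ldy]) simp_all

lemma ldy_even_comb_eq_zero: "(\<And>i. i < n \<Longrightarrow> fps_nth p i = 0) \<Longrightarrow> ldy_even_comb m n A p = (\<lambda>x C. 0)"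
  by (simp add: ldy_even_comb_def)

lemma ldy_odd_comb_eq_zero: "(\<And>i. i < n \<Longrightarrow> fps_nth p i = 0) \<Longrightarrow> ldy_odd_comb m n A p = (\<lambda>x C. 0)"
  by (simp add: ldy_odd_comb_def)

lemma ldy_ldy_even_comb: "admissible m A \<Longrightarrow> ldy m (ldy_even_comb m n A p) = ldy_odd_comb m n A p"
  unfolding ldy_even_comb_def ldy_odd_comb_def
  by (subst ldy_lincomb) (simp_all add: admissible_funpow[OF admissible_ldy])

lemma ldy_ldy_odd_comb:
  assumes A: "admissible m A" and nil: "(ldy m ^^ (2 * n)) A = (\<lambda>x C. 0)"
  shows "ldy m (ldy_odd_comb m n A q) = ldy_even_comb m n A (fps_X * q)"
proof -
  have "ldy m (ldy_odd_comb m n A q) = (\<lambda>x C. \<Sum>i<n. fps_nth q i * ldy m ((ldy m ^^ (2 * i + 1)) A) x C)"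
    unfolding ldy_odd_comb_def
    by (subst ldy_lincomb) (simp_all add: admissible_funpow[OF admissible_ldy A] del: funpow.simps)
  also have "\<dots> = (\<lambda>x C. \<Sum>i<n. fps_nth q i * (ldy m ^^ (2 * Suc i)) A x C)"
    by simp
  also have "\<dots> = (\<lambda>x C. \<Sum>i<Suc n. fps_nth (fps_X * q) i * (ldy m ^^ (2 * i)) A x C)"
    by (simp only: sum.lessThan_Suc_shift) simp
  also have "\<dots> = ldy_even_comb m n A (fps_X * q)"
    using nil by (simp add: ldy_even_comb_def)
  finally show ?thesis .
qed

lemma ldirac_exp_ansatz_ldy_combs:
  assumes m: "m \<ge> 2" and A: "admissible m A" and nil: "(ldy m ^^ (2 * n)) A = (\<lambda>x C. 0)"
  shows "ldirac m (exp_ansatz m (ldy_even_comb m n A p) (ldy_odd_comb m n A q)) =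
    exp_ansatz m (ldy_even_comb m n A (fps_X * q)) (ldy_odd_comb m n A (p + 2 * q))"
proof -
  have "fadd (ldy_odd_comb m n A p) (fscale 2 (ldy_odd_comb m n A q)) = ldy_odd_comb m n A (p + 2 * q)"
    by (simp add: fadd_def fscale_def ldy_odd_comb_def fps_nth_mult_2 sum.distrib sum_distrib_left
        distrib_right mult.assoc)
  then show ?thesis
    using ldirac_exp_ansatz[OF m admissible_ldy_even_comb[OF A] admissible_ldy_odd_comb[OF A]]
      ldy_ldy_even_comb[OF A] ldy_ldy_odd_comb[OF A nil] by simp
qed

lemma ldirac_funpow_exp_ansatz_ldy_combs:
  assumes m: "m \<ge> 2" and A: "admissible m A" and nil: "(ldy m ^^ (2 * n)) A = (\<lambda>x C. 0)"
    and g: "1 + 2 * g = fps_X * g ^ 2"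
  shows "(ldirac m ^^ N) (exp_ansatz m (ldy_even_comb m n A 1) (ldy_odd_comb m n A g)) =
    exp_ansatz m (ldy_even_comb m n A ((fps_X * g) ^ N)) (ldy_odd_comb m n A ((fps_X * g) ^ N * g))"
proof (induction N)
  case (Suc N)
  have "(fps_X * g) ^ N + 2 * ((fps_X * g) ^ N * g) = (fps_X * g) ^ N * (1 + 2 * g)"
    by (simp add: algebra_simps)
  also have "\<dots> = (fps_X * g) ^ Suc N * g"
    unfolding g by (simp add: power2_eq_square algebra_simps)
  finally show ?case
    using Suc by (simp add: ldirac_exp_ansatz_ldy_combs[OF m A nil] algebra_simps)
qed simp

lemma ldirac_funpow_exp_ansatz_cstd_eq_zero:
  assumes m: "m \<ge> 2" and n: "n \<ge> 1" and A: "admissible m A"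
    and nil: "(ldy m ^^ (2 * n)) A = (\<lambda>x C. 0)" and c: "\<forall>k\<in>{1..n}. c k = cstd k"
  shows "(ldirac m ^^ n) (exp_ansatz m A (\<lambda>x C. \<Sum>k=1..n. c k * (ldy m ^^ (2 * k - 1)) A x C)) =
    (\<lambda>x. clzero)"
proof -
  have "ldy_even_comb m n A 1 = A"
    using n by (cases n) (simp_all add: ldy_even_comb_def sum.lessThan_Suc_shift del: sum.lessThan_Suc)
  moreover have "ldy_odd_comb m n A cstd_fps = (\<lambda>x C. \<Sum>k=1..n. c k * (ldy m ^^ (2 * k - 1)) A x C)"
    using c by (simp add: ldy_odd_comb_def cstd_fps_def sum.atLeast1_atMost_eq)
  moreover have "ldy_even_comb m n A ((fps_X * cstd_fps) ^ n) = (\<lambda>x C. 0)"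
    by (rule ldy_even_comb_eq_zero) (simp add: power_mult_distrib fps_X_power_mult_nth)
  moreover have "ldy_odd_comb m n A ((fps_X * cstd_fps) ^ n * cstd_fps) = (\<lambda>x C. 0)"
    by (rule ldy_odd_comb_eq_zero) (rule fps_nth_X_mult_power_mult)
  ultimately show ?thesis
    using ldirac_funpow_exp_ansatz_ldy_combs[OF m A nil cstd_fps_quadratic, of n]
    by (simp add: exp_ansatz_zero)
qed

theorem proposition1:
  fixes m n :: nat and A :: "(nat \<Rightarrow> real) \<Rightarrow> clif" and c :: "nat \<Rightarrow> real"
  assumes "m \<ge> 2" and "n \<ge> 1"
    and "clif_valued m A" and "depends_on_y m A" and "smooth_y m A"
    and "(Utilde m ^^ n) A = (\<lambda>x. clzero)"
  defines "B \<equiv> (\<lambda>x C. \<Sum>k=1..n. c k * (ldy m ^^ (2 * k - 1)) A x C)"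
  defines "F \<equiv> (\<lambda>x. cladd (clmul m (cexpz x) (A x)) (clmul m (cexpzbar x) (B x)))"
  shows "(rdirac m ^^ n) F = (\<lambda>x. clzero) \<and>
         ((\<forall>k\<in>{1..n}. c k = cstd k) \<longrightarrow> (ldirac m ^^ n) F = (\<lambda>x. clzero))"
proof -
  have A: "admissible m A" using assms(3-5) by (simp add: admissible_def)
  have U: "(Utilde m ^^ n) A = (\<lambda>x C. 0)" using assms(6) by (simp add: clzero_def)
  have F: "F = exp_ansatz m A B" by (simp add: F_def exp_ansatz_def exp_comb_def)
  have "(ldy m ^^ (2 * n)) A = (\<lambda>x C. 0)"
    using rdy_funpow_eq_zero_if_Utilde_funpow_eq_zero[OF _ A U] rdy_funpow_even_eq_ldy_funpow[OF A]
      assms(1) by simp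
  then show ?thesis
    unfolding F B_def
    using rdirac_funpow_exp_ansatz_odd_ldy_eq_zero[OF assms(1) A U]
      ldirac_funpow_exp_ansatz_cstd_eq_zero[OF assms(1,2) A] by blast
qed

end
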